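(* Let $k\ge1$ and either $\beta\in(0,k\wedge2)$ or $k=1=\beta$, and let $\hat v$ be as in the context. Let $F\subset(0,\infty)\times\mathbb{R}^k$ be a compact interval and $0<\varepsilon_0<1$. Let $(t,x)\in F$ and $0<\rho\le\varepsilon_0$ with $B_{3\rho}(t,x)\subset F$, and set $(t',x')=(t,x)$. Fix $\delta\in\big(\frac{2-\beta}{2},(2-\beta)\wedge1\big)$. Then there exists a finite constant $C$ such that for all $j\in\{1,\dots,d\}$, $$|\mathrm E[(\hat v_j(s_1,y_1)-\hat v_j(s_2,y_2))\hat v_j(t',x')]|\le C\big(|s_1-s_2|^{\frac{2-\beta}{2}}+|y_1-y_2|^{\delta}\big)$$ holds for all $(s_1,y_1),(s_2,y_2)\in B_{2\rho}(t,x)$, and also for all $(s_1,y_1),(s_2,y_2)\in B_{2\rho}(\tilde t,\tilde x)$ whenever $B_{2\rho}(\tilde t,\tilde x)\subset F$ and $\Delta((t,x),(\tilde t,\tilde x))\ge6\rho$.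
   Context: Let $d\ge1$ and let $W=W_1+iW_2$ with $W_1,W_2$ independent $\mathbb{R}^d$-valued space-time Gaussian white noises on $\mathbb{R}^{1+k}$. Define $v(t,x)=\int_{\mathbb{R}}\int_{\mathbb{R}^k}e^{-i\xi\cdot x}\frac{e^{-i\tau t}-e^{-t|\xi|^2}}{|\xi|^2-i\tau}|\xi|^{-(k-\beta)/2}W(d\tau,d\xi)$ and $\hat v(t,x)=\mathrm{Re}\,v(t,x)$, $(t,x)\in\mathbb{R}_+\times\mathbb{R}^k$ (this has the law of the mild solution of the system of stochastic heat equations $\partial_t\hat v_j=\Delta\hat v_j+\dot{\hat W}_j$, $\hat v(0,\cdot)=0$, driven by noise white in time with spatial covariance $|x-y|^{-\beta}$, or space-time white noise when $k=1=\beta$). Here $\Delta((t,x),(s,y))=|t-s|^{\frac{2-\beta}{4}}+|x-y|^{\frac{2-\beta}{2}}$ and $B_r(t,x)=[t-r^{4/(2-\beta)},t+r^{4/(2-\beta)}]\times\prod_{j=1}^k[x_j-r^{2/(2-\beta)},x_j+r^{2/(2-\beta)}]$. *)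

theory Defs
  imports "HOL-Probability.Probability"
begin

type_synonym 'k pt = "real \<times> (real ^ 'k)"

definition gker :: "real \<Rightarrow> real \<Rightarrow> real ^ 'k \<Rightarrow> complex" where
  "gker t \<tau> \<xi> = (cis (- \<tau> * t) - complex_of_real (exp (- t * (norm \<xi>)\<^sup>2)))
                 / (complex_of_real ((norm \<xi>)\<^sup>2) - \<i> * complex_of_real \<tau>)"

text \<open>Covariance E[hat v_j(s,y) hat v_j(t,x)] obtained from the white-noise representation
 (Ito isometry for W = W1 + i W2 and hat v = Re v):
 Re of the integral of e^{-i xi.(y-x)} g_s conj(g_t) |xi|^{-(k-beta)} over (tau,xi).\<close>
definition vcov :: "real \<Rightarrow> 'k::finite pt \<Rightarrow> 'k pt \<Rightarrow> real" where
  "vcov \<beta> p q = Re (integral\<^sup>L lborel (\<lambda>(\<tau>::real, \<xi>::real ^ 'k).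
       cis (- (\<xi> \<bullet> (snd p - snd q))) * gker (fst p) \<tau> \<xi> * cnj (gker (fst q) \<tau> \<xi>)
       * complex_of_real ((norm \<xi>) powr (- (real CARD('k) - \<beta>)))))"

definition Dist :: "real \<Rightarrow> 'k::finite pt \<Rightarrow> 'k pt \<Rightarrow> real" where
  "Dist \<beta> p q = \<bar>fst p - fst q\<bar> powr ((2 - \<beta>) / 4) + norm (snd p - snd q) powr ((2 - \<beta>) / 2)"

definition Bbox :: "real \<Rightarrow> real \<Rightarrow> 'k::finite pt \<Rightarrow> 'k pt set" where
  "Bbox \<beta> r p = {q. \<bar>fst q - fst p\<bar> \<le> r powr (4 / (2 - \<beta>)) \<and>
                     (\<forall>i. \<bar>snd q $ i - snd p $ i\<bar> \<le> r powr (2 / (2 - \<beta>)))}"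

text \<open>X is (a version of) hat v: an R^d-valued process (components j < d) on a probability
 space, square integrable, with covariance E[X_j(p) X_j(q)] = vcov beta p q.\<close>
definition hat_v_process :: "'a measure \<Rightarrow> nat \<Rightarrow> real \<Rightarrow> (nat \<Rightarrow> 'k::finite pt \<Rightarrow> 'a \<Rightarrow> real) \<Rightarrow> bool" where
  "hat_v_process M d \<beta> X \<longleftrightarrow> prob_space M \<and>
     (\<forall>j<d. \<forall>p. X j p \<in> borel_measurable M \<and> integrable M (\<lambda>\<omega>. (X j p \<omega>)\<^sup>2)) \<and>
     (\<forall>j<d. \<forall>p q. integral\<^sup>L M (\<lambda>\<omega>. X j p \<omega> * X j q \<omega>) = vcov \<beta> p q)"

end

theory Submission
  imports Defs
begin

(* By the covariance formula, E[(v_j(s1,y1) - v_j(s2,y2)) v_j(t,x)] is the real part of the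
   integral over (tau, xi) of the difference of e^{-i xi.(y-x)} g_s conj(g_t) |xi|^{beta-k}.
   Writing R = | |xi|^2 - i tau |, the kernel satisfies |g_s| <= 3 min(s, 1/R) and
   |g_s1 - g_s2| <= 3 min(1/R, |s1 - s2|), while |e^{-i xi.y1} - e^{-i xi.y2}| <= 2 (|xi| |y1 - y2|)^delta.
   The spatial increment is thus controlled by the integral of |xi|^delta min(T, 1/R)^2 |xi|^{beta-k},
   which is finite because delta < 2 - beta; the temporal increment by the integral of
   min(1/R, h) R^{-1} |xi|^{beta-k}, which is O(h^{(2-beta)/2}): split at |xi| = h^{-1/2} and, on
   small frequencies, interpolate 1/R <= |xi|^{-2 theta} |tau|^{theta-1}. The radial integrals are
   bounded by summing over dyadic shells. The constant depends only on an upper bound T for the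
   times, so the conditions on the boxes merely keep all points inside F. *)

section \<open>One-dimensional integrals\<close>

lemma nn_integral_comp_abs_le:
  fixes g :: "real \<Rightarrow> real"
  assumes [measurable]: "g \<in> borel_measurable borel"
  shows "(\<integral>\<^sup>+\<tau>. ennreal (g \<bar>\<tau>\<bar>) \<partial>lborel) \<le> 2 * (\<integral>\<^sup>+\<tau>. ennreal (g \<tau> * indicator {0..} \<tau>) \<partial>lborel)"
proof -
  have "(\<integral>\<^sup>+\<tau>. ennreal (g \<bar>\<tau>\<bar>) \<partial>lborel)
      = (\<integral>\<^sup>+\<tau>. ennreal (g \<tau> * indicator {0..} \<tau>) + ennreal (g (-\<tau>) * indicator {0<..} (-\<tau>)) \<partial>lborel)"
    by (rule nn_integral_cong) (auto simp: indicator_def)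
  also have "\<dots> = (\<integral>\<^sup>+\<tau>. ennreal (g \<tau> * indicator {0..} \<tau>) \<partial>lborel)
                + (\<integral>\<^sup>+\<tau>. ennreal (g (-\<tau>) * indicator {0<..} (-\<tau>)) \<partial>lborel)"
    by (rule nn_integral_add) auto
  also have "(\<integral>\<^sup>+\<tau>. ennreal (g (-\<tau>) * indicator {0<..} (-\<tau>)) \<partial>lborel)
      = (\<integral>\<^sup>+\<tau>. ennreal (g \<tau> * indicator {0<..} \<tau>) \<partial>lborel)"
    using nn_integral_real_affine[of "\<lambda>\<tau>. ennreal (g \<tau> * indicator {0<..} \<tau>)" "-1" 0] by simp
  also have "\<dots> \<le> (\<integral>\<^sup>+\<tau>. ennreal (g \<tau> * indicator {0..} \<tau>) \<partial>lborel)"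
    by (rule nn_integral_mono) (auto simp: indicator_def)
  finally show ?thesis by (simp add: mult_2 add_left_mono)
qed

lemma nn_integral_indicator_has_integral:
  fixes f :: "real \<Rightarrow> real"
  assumes "(f has_integral I) S" "\<And>x. x \<in> S \<Longrightarrow> 0 \<le> f x" "f \<in> borel_measurable borel" "S \<in> sets borel"
  shows "(\<integral>\<^sup>+x. ennreal (f x * indicator S x) \<partial>lborel) = ennreal I"
proof (rule nn_integral_has_integral_lborel)
  show "((\<lambda>x. f x * indicator S x) has_integral I) UNIV"
  proof -
    have "(\<lambda>x. f x * indicator S x) = (\<lambda>x. if x \<in> S then f x else 0)"
      by (auto simp: indicator_def)
    then show ?thesis using assms(1) by (simp add: has_integral_restrict_UNIV)
  qed
qed (use assms in \<open>auto simp: indicator_def\<close>)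

lemma nn_integral_powr_Icc:
  assumes "0 < L" "-1 < a"
  shows "(\<integral>\<^sup>+\<tau>. ennreal (\<tau> powr a * indicator {0..L} \<tau>) \<partial>lborel) = ennreal (L powr (a + 1) / (a + 1))"
  by (rule nn_integral_indicator_has_integral has_integral_powr_from_0)+ (use assms in auto)

lemma nn_integral_inverse_sq_Ici:
  assumes "0 < A"
  shows "(\<integral>\<^sup>+\<tau>. ennreal (\<tau> powr (-2) * indicator {A..} \<tau>) \<partial>lborel) = ennreal (1 / A)"
proof -
  have "((\<lambda>x. x powr (-2)) has_integral 1 / A) {A..}"
    using has_integral_powr_to_inf[of "-2" A] assms by (simp add: powr_minus_divide)
  then show ?thesis
    by (rule nn_integral_indicator_has_integral) auto
qed

text \<open>\<open>bump A \<tau>\<close> is \<open>(min (1 / A) (1 / \<bar>\<tau>\<bar>))\<^sup>2\<close>, written with a case split so that it also has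
  the right value at \<open>\<tau> = 0\<close>, where \<open>1 / 0 = 0\<close>.\<close>

definition bump :: "real \<Rightarrow> real \<Rightarrow> real" where
  "bump A \<tau> = (if \<bar>\<tau>\<bar> \<le> A then 1 / A\<^sup>2 else 1 / \<tau>\<^sup>2)"

lemma bump_nonneg: "0 \<le> bump A \<tau>"
  by (simp add: bump_def)

lemma sq_le_bump:
  assumes "0 < A" "0 \<le> m" "m \<le> 1 / A" "\<bar>\<tau>\<bar> * m \<le> 1"
  shows "m\<^sup>2 \<le> bump A \<tau>"
proof (cases "\<bar>\<tau>\<bar> \<le> A")
  case True
  then show ?thesis
    using power_mono[of m "1 / A" 2] assms by (simp add: bump_def power_divide)
next
  case False
  then have "m \<le> 1 / \<bar>\<tau>\<bar>"
    using assms by (simp add: field_simps)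
  then show ?thesis
    using power_mono[of m "1 / \<bar>\<tau>\<bar>" 2] False assms by (simp add: bump_def power_divide)
qed

lemma nn_integral_bump_le:
  assumes A: "0 < A"
  shows "(\<integral>\<^sup>+\<tau>. ennreal (bump A \<tau>) \<partial>lborel) \<le> ennreal (4 / A)"
proof -
  define g where "g \<tau> = (if \<tau> \<le> A then 1 / A\<^sup>2 else 1 / \<tau>\<^sup>2)" for \<tau> :: real
  have g_meas: "g \<in> borel_measurable borel"
    unfolding g_def by measurable
  have g_le: "ennreal (g \<tau> * indicator {0..} \<tau>)
      \<le> ennreal (1 / A\<^sup>2 * indicator {0..A} \<tau>) + ennreal (\<tau> powr (-2) * indicator {A..} \<tau>)" for \<tau>
  proof (cases "\<tau> \<le> A")
    case False
    then have "\<tau> powr (-2) = 1 / \<tau>\<^sup>2"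
      using A by (simp add: powr_minus_divide powr_realpow)
    then show ?thesis
      using False A by (auto simp: g_def indicator_def)
  qed (auto simp: g_def indicator_def)
  have "(\<integral>\<^sup>+\<tau>. ennreal (bump A \<tau>) \<partial>lborel) = (\<integral>\<^sup>+\<tau>. ennreal (g \<bar>\<tau>\<bar>) \<partial>lborel)"
    by (rule nn_integral_cong) (simp add: bump_def g_def)
  also have "\<dots> \<le> 2 * (\<integral>\<^sup>+\<tau>. ennreal (g \<tau> * indicator {0..} \<tau>) \<partial>lborel)"
    by (rule nn_integral_comp_abs_le[OF g_meas])
  also have "(\<integral>\<^sup>+\<tau>. ennreal (g \<tau> * indicator {0..} \<tau>) \<partial>lborel)
      \<le> (\<integral>\<^sup>+\<tau>. ennreal (1 / A\<^sup>2 * indicator {0..A} \<tau>) \<partial>lborel)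
        + (\<integral>\<^sup>+\<tau>. ennreal (\<tau> powr (-2) * indicator {A..} \<tau>) \<partial>lborel)"
    by (subst nn_integral_add[symmetric]) (auto intro!: nn_integral_mono g_le simp del: times_divide_eq_left)
  also have "(\<integral>\<^sup>+\<tau>. ennreal (1 / A\<^sup>2 * indicator {0..A} \<tau>) \<partial>lborel) = ennreal (1 / A)"
  proof -
    have "(\<integral>\<^sup>+\<tau>. ennreal (1 / A\<^sup>2 * indicator {0..A} \<tau>) \<partial>lborel)
        = (\<integral>\<^sup>+\<tau>. ennreal (1 / A\<^sup>2) * indicator {0..A} \<tau> \<partial>lborel)"
      by (rule nn_integral_cong) (auto simp: indicator_def)
    also have "\<dots> = ennreal (1 / A\<^sup>2 * A)"
      using A ennreal_mult[of "1 / A\<^sup>2" A] by (simp add: nn_integral_cmult_indicator)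
    finally show ?thesis
      by (simp add: power2_eq_square)
  qed
  also have "ennreal (1 / A) + (\<integral>\<^sup>+\<tau>. ennreal (\<tau> powr (-2) * indicator {A..} \<tau>) \<partial>lborel) = ennreal (2 / A)"
    using A by (simp add: nn_integral_inverse_sq_Ici ennreal_plus[symmetric] del: ennreal_plus)
  also have "2 * ennreal (2 / A) = ennreal (4 / A)"
    using A ennreal_mult[of 2 "2 / A"] by simp
  finally show ?thesis
    by (simp add: mult_left_mono)
qed

lemma nn_integral_abs_powr_le:
  assumes L: "0 < L" and \<theta>: "0 < \<theta>"
  shows "(\<integral>\<^sup>+\<tau>. ennreal (if \<bar>\<tau>\<bar> \<le> L then \<bar>\<tau>\<bar> powr (\<theta> - 1) else 0) \<partial>lborel) \<le> ennreal (2 * L powr \<theta> / \<theta>)"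
proof -
  define g where "g \<tau> = (if \<tau> \<le> L then \<tau> powr (\<theta> - 1) else 0)" for \<tau> :: real
  have g_meas: "g \<in> borel_measurable borel"
    unfolding g_def by measurable
  have "(\<integral>\<^sup>+\<tau>. ennreal (if \<bar>\<tau>\<bar> \<le> L then \<bar>\<tau>\<bar> powr (\<theta> - 1) else 0) \<partial>lborel)
      = (\<integral>\<^sup>+\<tau>. ennreal (g \<bar>\<tau>\<bar>) \<partial>lborel)"
    by (simp add: g_def)
  also have "\<dots> \<le> 2 * (\<integral>\<^sup>+\<tau>. ennreal (g \<tau> * indicator {0..} \<tau>) \<partial>lborel)"
    by (rule nn_integral_comp_abs_le[OF g_meas])
  also have "(\<integral>\<^sup>+\<tau>. ennreal (g \<tau> * indicator {0..} \<tau>) \<partial>lborel)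
      = (\<integral>\<^sup>+\<tau>. ennreal (\<tau> powr (\<theta> - 1) * indicator {0..L} \<tau>) \<partial>lborel)"
    by (rule nn_integral_cong) (auto simp: g_def indicator_def)
  also have "\<dots> = ennreal (L powr \<theta> / \<theta>)"
    using nn_integral_powr_Icc[of L "\<theta> - 1"] L \<theta> by simp
  also have "2 * ennreal (L powr \<theta> / \<theta>) = ennreal (2 * L powr \<theta> / \<theta>)"
    using \<theta> ennreal_mult[of 2 "L powr \<theta> / \<theta>"] by simp
  finally show ?thesis
    by (simp add: mult_left_mono)
qed

section \<open>Power weights on Euclidean space\<close>

lemma nn_integral_le_geometric_cover:
  fixes f :: "'a \<Rightarrow> ennreal"
  assumes S: "\<And>j. S j \<in> sets M" and cover: "A \<subseteq> (\<Union>j. S j)" and f: "f \<in> borel_measurable M"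
    and shell: "\<And>j. (\<integral>\<^sup>+x. f x * indicator (S j) x \<partial>M) \<le> ennreal (c * q ^ j)"
    and c: "0 \<le> c" and q: "0 \<le> q" "q < 1"
  shows "(\<integral>\<^sup>+x. f x * indicator A x \<partial>M) \<le> ennreal (c / (1 - q))"
proof -
  have "f x * indicator A x \<le> (\<Sum>j. f x * indicator (S j) x)" for x
  proof (cases "x \<in> A")
    case True
    then obtain i where "x \<in> S i"
      using cover by blast
    then show ?thesis
      using True sum_le_suminf[OF summableI, of "{i}" "\<lambda>j. f x * indicator (S j) x"] by simp
  qed simp
  then have "(\<integral>\<^sup>+x. f x * indicator A x \<partial>M) \<le> (\<integral>\<^sup>+x. (\<Sum>j. f x * indicator (S j) x) \<partial>M)"
    by (rule nn_integral_mono)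
  also have "\<dots> = (\<Sum>j. \<integral>\<^sup>+x. f x * indicator (S j) x \<partial>M)"
    by (rule nn_integral_suminf) (use S f in auto)
  also have "\<dots> \<le> (\<Sum>j. ennreal (c * q ^ j))"
    by (intro suminf_le shell) auto
  also have "\<dots> = ennreal (c / (1 - q))"
    using c q by (simp add: suminf_ennreal2 summable_geometric suminf_mult suminf_geometric divide_simps)
  finally show ?thesis .
qed

lemma nn_integral_bounded_on_cball:
  fixes S :: "'a::euclidean_space set"
  assumes "S \<subseteq> cball 0 R" "S \<in> sets lborel" "0 \<le> R" "0 \<le> c" "\<And>x. x \<in> S \<Longrightarrow> f x \<le> c"
  shows "(\<integral>\<^sup>+x. ennreal (f x) * indicator S x \<partial>lborel) \<le> ennreal (c * unit_ball_vol DIM('a) * R ^ DIM('a))"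
proof -
  have "(\<integral>\<^sup>+x. ennreal (f x) * indicator S x \<partial>lborel) \<le> (\<integral>\<^sup>+x. ennreal c * indicator S x \<partial>lborel)"
    by (rule nn_integral_mono) (auto simp: indicator_def assms(5) ennreal_leI)
  also have "\<dots> = ennreal c * emeasure lborel S"
    using assms by (simp add: nn_integral_cmult_indicator)
  also have "\<dots> \<le> ennreal c * emeasure lborel (cball (0::'a) R)"
    by (intro mult_left_mono emeasure_mono assms) auto
  also have "\<dots> = ennreal (c * unit_ball_vol DIM('a) * R ^ DIM('a))"
    using assms by (simp add: emeasure_cball ennreal_mult mult.assoc)
  finally show ?thesis .
qed

lemma dyadic_scale_exists:
  fixes t :: real
  assumes "0 < t" "t \<le> 1"
  obtains j where "1 / 2 ^ Suc j < t" "t \<le> 1 / 2 ^ j"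
proof -
  obtain n where "(1 / 2) ^ n < t"
    using real_arch_pow_inv[of t "1 / 2"] assms by auto
  then have "\<exists>j<n. (\<forall>i\<le>j. \<not> 1 / 2 ^ i < t) \<and> 1 / 2 ^ Suc j < t"
    using assms by (intro ex_least_nat_less) (auto simp: power_one_over)
  then show ?thesis
    using that by (meson order.refl not_less)
qed

lemma powr_dyadic:
  fixes r e :: real
  assumes "0 < r"
  shows "(r / 2 ^ j) powr e = r powr e * (2 powr (- e)) ^ j"
    and "(r * 2 ^ j) powr e = r powr e * (2 powr e) ^ j"
  using assms by (simp_all add: powr_divide powr_mult powr_realpow[symmetric] powr_powr
      powr_minus_divide mult.commute)

lemma nn_integral_norm_powr_ball_le:
  fixes a :: real
  assumes a: "0 \<le> a" "a < DIM('a::euclidean_space)"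
  obtains C where "0 \<le> C"
    "\<And>r. 0 < r \<Longrightarrow> (\<integral>\<^sup>+x. ennreal (norm (x::'a) powr (-a) * indicator {x. norm x \<le> r} x) \<partial>lborel)
        \<le> ennreal (C * r powr (DIM('a) - a))"
proof
  define n where "n = real DIM('a)"
  define q where "q = 2 powr (a - n)"
  have q: "0 < q" "q < 1"
    using a powr_less_mono[of "a - n" 0 2] by (auto simp: q_def n_def)
  have rescale: "(\<rho> / 2) powr (-a) * c * \<rho> ^ DIM('a) = c * 2 powr a * \<rho> powr (n - a)" if "0 < \<rho>" for \<rho> c
    using that by (simp add: n_def powr_divide powr_minus_divide powr_realpow[symmetric] powr_diff)
  show "0 \<le> unit_ball_vol DIM('a) * 2 powr a / (1 - q)"
    using q by simp
  fix r :: real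
  assume r: "0 < r"
  define S where "S j = {x::'a. r / 2 ^ Suc j < norm x \<and> norm x \<le> r / 2 ^ j}" for j
  have S_meas: "S j \<in> sets lborel" for j
    unfolding S_def by measurable
  have cover: "{x. norm x \<le> r} - {0} \<subseteq> (\<Union>j. S j)"
  proof
    fix x :: 'a
    assume "x \<in> {x. norm x \<le> r} - {0}"
    then obtain j where "1 / 2 ^ Suc j < norm x / r" "norm x / r \<le> 1 / 2 ^ j"
      using r dyadic_scale_exists[of "norm x / r"] by auto
    then have "x \<in> S j"
      using r by (auto simp: S_def field_simps)
    then show "x \<in> (\<Union>j. S j)" by blast
  qed
  have shell: "(\<integral>\<^sup>+x. ennreal (norm x powr (-a)) * indicator (S j) x \<partial>lborel)
      \<le> ennreal (unit_ball_vol DIM('a) * 2 powr a * r powr (n - a) * q ^ j)" for j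
  proof -
    have "(\<integral>\<^sup>+x. ennreal (norm x powr (-a)) * indicator (S j) x \<partial>lborel)
        \<le> ennreal ((r / 2 ^ j / 2) powr (-a) * unit_ball_vol DIM('a) * (r / 2 ^ j) ^ DIM('a))"
      by (rule nn_integral_bounded_on_cball)
        (use r S_meas a in \<open>auto simp: S_def intro!: powr_mono2'\<close>)
    also have "(r / 2 ^ j / 2) powr (-a) * unit_ball_vol DIM('a) * (r / 2 ^ j) ^ DIM('a)
        = unit_ball_vol DIM('a) * 2 powr a * (r / 2 ^ j) powr (n - a)"
      using rescale[of "r / 2 ^ j"] r by simp
    also have "\<dots> = unit_ball_vol DIM('a) * 2 powr a * r powr (n - a) * q ^ j"
      using r by (simp add: powr_dyadic q_def)
    finally show ?thesis .
  qed
  \<comment> \<open>The origin, missed by the shells, contributes nothing since \<open>0 powr (-a) = 0\<close>.\<close>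
  have "(\<integral>\<^sup>+x. ennreal (norm (x::'a) powr (-a) * indicator {x. norm x \<le> r} x) \<partial>lborel)
      = (\<integral>\<^sup>+x. ennreal (norm (x::'a) powr (-a)) * indicator ({x. norm x \<le> r} - {0}) x \<partial>lborel)"
    by (rule nn_integral_cong) (auto simp: indicator_def)
  also have "\<dots> \<le> ennreal (unit_ball_vol DIM('a) * 2 powr a * r powr (n - a) / (1 - q))"
    by (rule nn_integral_le_geometric_cover[OF S_meas cover _ shell]) (use r q in auto)
  finally show "(\<integral>\<^sup>+x. ennreal (norm (x::'a) powr (-a) * indicator {x. norm x \<le> r} x) \<partial>lborel)
      \<le> ennreal (unit_ball_vol DIM('a) * 2 powr a / (1 - q) * r powr (DIM('a) - a))"
    by (simp add: n_def)
qed

lemma nn_integral_norm_powr_outside_ball_le: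
  fixes a :: real
  assumes a: "DIM('a::euclidean_space) < a"
  obtains C where "0 \<le> C"
    "\<And>r. 0 < r \<Longrightarrow> (\<integral>\<^sup>+x. ennreal (norm (x::'a) powr (-a) * indicator {x. r \<le> norm x} x) \<partial>lborel)
        \<le> ennreal (C * r powr (DIM('a) - a))"
proof
  define n where "n = real DIM('a)"
  define q where "q = 2 powr (n - a)"
  have q: "0 < q" "q < 1"
    using a powr_less_mono[of "n - a" 0 2] by (auto simp: q_def n_def)
  have rescale: "\<rho> powr (-a) * c * (2 * \<rho>) ^ DIM('a) = c * 2 ^ DIM('a) * \<rho> powr (n - a)" if "0 < \<rho>" for \<rho> c
    using that by (simp add: n_def powr_minus_divide powr_realpow[symmetric] powr_diff power_mult_distrib)
  show "0 \<le> unit_ball_vol DIM('a) * 2 ^ DIM('a) / (1 - q)"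
    using q by simp
  fix r :: real
  assume r: "0 < r"
  define S where "S j = {x::'a. r * 2 ^ j \<le> norm x \<and> norm x < r * 2 ^ Suc j}" for j
  have S_meas: "S j \<in> sets lborel" for j
    unfolding S_def by measurable
  have cover: "{x. r \<le> norm x} \<subseteq> (\<Union>j. S j)"
  proof
    fix x :: 'a
    assume x: "x \<in> {x. r \<le> norm x}"
    then have nx: "0 < norm x"
      using r by (metis less_le_trans mem_Collect_eq)
    then have "0 < r / norm x" "r / norm x \<le> 1"
      using r x by simp_all
    then obtain j where "1 / 2 ^ Suc j < r / norm x" "r / norm x \<le> 1 / 2 ^ j"
      by (rule dyadic_scale_exists)
    then have "x \<in> S j"
      using nx by (auto simp: S_def field_simps)
    then show "x \<in> (\<Union>j. S j)" by blast
  qed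
  have shell: "(\<integral>\<^sup>+x. ennreal (norm x powr (-a)) * indicator (S j) x \<partial>lborel)
      \<le> ennreal (unit_ball_vol DIM('a) * 2 ^ DIM('a) * r powr (n - a) * q ^ j)" for j
  proof -
    have "(\<integral>\<^sup>+x. ennreal (norm x powr (-a)) * indicator (S j) x \<partial>lborel)
        \<le> ennreal ((r * 2 ^ j) powr (-a) * unit_ball_vol DIM('a) * (2 * (r * 2 ^ j)) ^ DIM('a))"
      by (rule nn_integral_bounded_on_cball)
        (use r S_meas a in \<open>auto simp: S_def intro!: powr_mono2'\<close>)
    also have "\<dots> = unit_ball_vol DIM('a) * 2 ^ DIM('a) * (r * 2 ^ j) powr (n - a)"
      using rescale[of "r * 2 ^ j"] r by simp
    also have "\<dots> = unit_ball_vol DIM('a) * 2 ^ DIM('a) * r powr (n - a) * q ^ j"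
      using r by (simp add: powr_dyadic q_def)
    finally show ?thesis .
  qed
  have "(\<integral>\<^sup>+x. ennreal (norm (x::'a) powr (-a) * indicator {x. r \<le> norm x} x) \<partial>lborel)
      = (\<integral>\<^sup>+x. ennreal (norm (x::'a) powr (-a)) * indicator {x. r \<le> norm x} x \<partial>lborel)"
    by (rule nn_integral_cong) (auto simp: indicator_def)
  also have "\<dots> \<le> ennreal (unit_ball_vol DIM('a) * 2 ^ DIM('a) * r powr (n - a) / (1 - q))"
    by (rule nn_integral_le_geometric_cover[OF S_meas cover _ shell]) (use r q in auto)
  finally show "(\<integral>\<^sup>+x. ennreal (norm (x::'a) powr (-a) * indicator {x. r \<le> norm x} x) \<partial>lborel)
      \<le> ennreal (unit_ball_vol DIM('a) * 2 ^ DIM('a) / (1 - q) * r powr (DIM('a) - a))"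
    by (simp add: n_def)
qed

section \<open>The heat symbol and the kernel\<close>

definition heat_symbol :: "real \<Rightarrow> 'a::real_normed_vector \<Rightarrow> real" where
  "heat_symbol \<tau> \<xi> = cmod (complex_of_real ((norm \<xi>)\<^sup>2) - \<i> * complex_of_real \<tau>)"

lemma heat_symbol_nonneg [simp]: "0 \<le> heat_symbol \<tau> \<xi>"
  by (simp add: heat_symbol_def)

lemma abs_le_heat_symbol: "\<bar>\<tau>\<bar> \<le> heat_symbol \<tau> \<xi>"
  unfolding heat_symbol_def
  using abs_Im_le_cmod[of "complex_of_real ((norm \<xi>)\<^sup>2) - \<i> * complex_of_real \<tau>"] by simp

lemma norm_sq_le_heat_symbol: "(norm \<xi>)\<^sup>2 \<le> heat_symbol \<tau> \<xi>"
  unfolding heat_symbol_def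
  using abs_Re_le_cmod[of "complex_of_real ((norm \<xi>)\<^sup>2) - \<i> * complex_of_real \<tau>"] by simp

lemma heat_symbol_pos: "\<xi> \<noteq> 0 \<Longrightarrow> 0 < heat_symbol \<tau> \<xi>"
  using norm_sq_le_heat_symbol[of \<xi> \<tau>] by (smt (verit) zero_less_norm_iff zero_less_power)

lemma abs_mult_inverse_heat_symbol_le: "\<bar>\<tau>\<bar> * (1 / heat_symbol \<tau> \<xi>) \<le> 1"
  using abs_le_heat_symbol[of \<tau> \<xi>] by (cases "heat_symbol \<tau> \<xi> = 0") (auto simp: field_simps)

lemma inverse_heat_symbol_le: "\<xi> \<noteq> 0 \<Longrightarrow> 1 / heat_symbol \<tau> \<xi> \<le> 1 / (norm \<xi>)\<^sup>2"
  using norm_sq_le_heat_symbol[of \<xi> \<tau>] by (simp add: frac_le)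

lemma borel_measurable_fst [measurable]:
  "fst \<in> borel_measurable (borel :: ('a::topological_space \<times> 'b::topological_space) measure)"
  by (intro borel_measurable_continuous_onI continuous_intros)

lemma borel_measurable_snd [measurable]:
  "snd \<in> (borel :: ('a::topological_space \<times> 'b::topological_space) measure) \<rightarrow>\<^sub>M borel"
  by (intro borel_measurable_continuous_onI continuous_intros)

lemma heat_symbol_measurable [measurable]:
  "(\<lambda>z. heat_symbol (fst z) (snd z)) \<in> borel_measurable (borel :: (real \<times> 'a::real_normed_vector) measure)"
  unfolding heat_symbol_def by (intro borel_measurable_continuous_onI continuous_intros)

lemma heat_symbol_measurable_time [measurable]: "(\<lambda>\<tau>. heat_symbol \<tau> \<xi>) \<in> borel_measurable borel"
  unfolding heat_symbol_def by (intro borel_measurable_continuous_onI continuous_intros)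

lemma inverse_heat_symbol_le_interpolation:
  assumes \<xi>: "\<xi> \<noteq> 0" and \<tau>: "\<tau> \<noteq> 0" and \<theta>: "0 < \<theta>" "\<theta> < 1"
  shows "1 / heat_symbol \<tau> \<xi> \<le> norm \<xi> powr (-2 * \<theta>) * \<bar>\<tau>\<bar> powr (\<theta> - 1)"
proof -
  define R where "R = heat_symbol \<tau> \<xi>"
  have R: "0 < R"
    using heat_symbol_pos[OF \<xi>] by (simp add: R_def)
  have "norm \<xi> powr (2 * \<theta>) = ((norm \<xi>)\<^sup>2) powr \<theta>"
    using \<xi> by (simp add: powr_powr[symmetric] powr_numeral)
  also have "\<dots> * \<bar>\<tau>\<bar> powr (1 - \<theta>) \<le> R powr \<theta> * R powr (1 - \<theta>)"
    using norm_sq_le_heat_symbol[of \<xi> \<tau>] abs_le_heat_symbol[of \<tau> \<xi>] \<theta>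
    by (intro mult_mono powr_mono2) (auto simp: R_def)
  also have "\<dots> = R"
    using R by (simp add: powr_add[symmetric])
  finally have "norm \<xi> powr (2 * \<theta>) * \<bar>\<tau>\<bar> powr (1 - \<theta>) \<le> R" .
  moreover have "0 < norm \<xi> powr (2 * \<theta>) * \<bar>\<tau>\<bar> powr (1 - \<theta>)"
    using \<xi> \<tau> by simp
  ultimately have "1 / R \<le> 1 / (norm \<xi> powr (2 * \<theta>) * \<bar>\<tau>\<bar> powr (1 - \<theta>))"
    by (intro divide_left_mono) auto
  then show ?thesis
    using \<xi> \<tau> by (simp add: R_def powr_minus divide_inverse inverse_mult_distrib powr_diff ac_simps)
qed

lemma norm_cis_diff_le: "cmod (cis a - cis b) \<le> min 2 \<bar>a - b\<bar>"
proof -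
  have "cis a - cis b = cis b * (cis (a - b) - 1)"
    by (simp add: algebra_simps cis_mult)
  then have "cmod (cis a - cis b) = cmod (iexp (a - b) - 1)"
    by (simp add: norm_mult cis_conv_exp)
  also have "\<dots> \<le> \<bar>a - b\<bar>"
    using iexp_approx1[of "a - b" 0] by simp
  finally show ?thesis
    using norm_triangle_ineq4[of "cis a" "cis b"] by simp
qed

lemma min_2_le_powr:
  fixes z \<delta> :: real
  assumes "0 \<le> z" "0 < \<delta>" "\<delta> \<le> 1"
  shows "min 2 z \<le> 2 * z powr \<delta>"
proof (cases "1 \<le> z")
  case True
  then have "1 \<le> z powr \<delta>"
    using assms by (intro ge_one_powr_ge_zero) auto
  then show ?thesis
    by simp
next
  case False
  then have "z \<le> z powr \<delta>"
    using assms powr_mono'[of \<delta> 1 z] by (cases "z = 0") auto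
  moreover have "min 2 z \<le> z" "0 \<le> z powr \<delta>"
    by simp_all
  ultimately show ?thesis
    by linarith
qed

lemma norm_cis_inner_diff_le:
  assumes "0 < \<delta>" "\<delta> \<le> 1"
  shows "cmod (cis (- (\<xi> \<bullet> (y1 - x))) - cis (- (\<xi> \<bullet> (y2 - x)))) \<le> 2 * (norm \<xi> * norm (y1 - y2)) powr \<delta>"
proof -
  have "cmod (cis (- (\<xi> \<bullet> (y1 - x))) - cis (- (\<xi> \<bullet> (y2 - x)))) \<le> min 2 \<bar>\<xi> \<bullet> (y1 - y2)\<bar>"
    using norm_cis_diff_le[of "- (\<xi> \<bullet> (y1 - x))" "- (\<xi> \<bullet> (y2 - x))"]
    by (simp add: inner_diff_right abs_minus_commute)
  also have "\<dots> \<le> min 2 (norm \<xi> * norm (y1 - y2))"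
    by (intro min.mono order.refl Cauchy_Schwarz_ineq2)
  also have "\<dots> \<le> 2 * (norm \<xi> * norm (y1 - y2)) powr \<delta>"
    using assms by (intro min_2_le_powr) auto
  finally show ?thesis .
qed

lemma abs_exp_diff_le:
  fixes x y :: real
  assumes "x \<le> 0" "y \<le> 0"
  shows "\<bar>exp x - exp y\<bar> \<le> min 1 \<bar>x - y\<bar>"
proof -
  have *: "exp q - exp p \<le> q - p" if "p \<le> q" "q \<le> 0" for p q :: real
  proof -
    have "exp q - exp p = exp q * (1 - exp (p - q))"
      by (simp add: algebra_simps exp_diff)
    also have "\<dots> \<le> 1 - exp (p - q)"
      using that by (intro mult_left_le_one_le) auto
    also have "\<dots> \<le> q - p"
      using exp_ge_add_one_self[of "p - q"] by linarith
    finally show ?thesis .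
  qed
  have "0 < exp x" "exp x \<le> 1" "0 < exp y" "exp y \<le> 1"
    using assms by auto
  then have "\<bar>exp x - exp y\<bar> \<le> 1"
    by arith
  moreover have "\<bar>exp x - exp y\<bar> \<le> \<bar>x - y\<bar>"
    using *[of x y] *[of y x] assms by (cases "x \<le> y") auto
  ultimately show ?thesis
    by simp
qed

lemma norm_gker_diff_le:
  assumes s: "0 \<le> s1" "0 \<le> s2"
  shows "cmod (gker s1 \<tau> \<xi> - gker s2 \<tau> \<xi>) \<le> 3 * min (1 / heat_symbol \<tau> \<xi>) \<bar>s1 - s2\<bar>"
proof -
  define u where "u = (norm \<xi>)\<^sup>2"
  define h where "h = \<bar>s1 - s2\<bar>"
  define D where "D = complex_of_real u - \<i> * complex_of_real \<tau>"
  define N where "N = (cis (- \<tau> * s1) - cis (- \<tau> * s2)) - complex_of_real (exp (- s1 * u) - exp (- s2 * u))"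
  have R: "heat_symbol \<tau> \<xi> = cmod D"
    by (simp add: heat_symbol_def D_def u_def)
  have u: "0 \<le> u" "u \<le> cmod D" and \<tau>: "\<bar>\<tau>\<bar> \<le> cmod D"
    using norm_sq_le_heat_symbol[of \<xi> \<tau>] abs_le_heat_symbol[of \<tau> \<xi>] by (auto simp: R u_def)
  have Dh: "\<bar>\<tau>\<bar> * h \<le> cmod D * h" "u * h \<le> cmod D * h" "0 \<le> cmod D * h"
    using \<tau> u by (auto simp: h_def intro: mult_right_mono)
  have "cmod (cis (- \<tau> * s1) - cis (- \<tau> * s2)) \<le> min 2 (\<bar>\<tau>\<bar> * h)"
    using norm_cis_diff_le[of "- \<tau> * s1" "- \<tau> * s2"]
    by (simp add: h_def abs_mult[symmetric] algebra_simps abs_minus_commute)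
  also have "\<dots> \<le> min 2 (cmod D * h)"
    using Dh by (intro min.mono) auto
  finally have cis_part: "cmod (cis (- \<tau> * s1) - cis (- \<tau> * s2)) \<le> min 2 (cmod D * h)" .
  have "\<bar>- s1 * u - - s2 * u\<bar> = u * h"
    using u by (simp add: h_def abs_mult left_diff_distrib[symmetric] abs_minus_commute)
  then have "\<bar>exp (- s1 * u) - exp (- s2 * u)\<bar> \<le> min 1 (u * h)"
    using abs_exp_diff_le[of "- s1 * u" "- s2 * u"] s u by simp
  also have "\<dots> \<le> min 1 (cmod D * h)"
    using Dh by (intro min.mono) auto
  finally have exp_part: "\<bar>exp (- s1 * u) - exp (- s2 * u)\<bar> \<le> min 1 (cmod D * h)" .
  have "cmod N \<le> cmod (cis (- \<tau> * s1) - cis (- \<tau> * s2)) + \<bar>exp (- s1 * u) - exp (- s2 * u)\<bar>"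
    unfolding N_def using norm_triangle_ineq4 by (metis norm_of_real)
  also have "\<dots> \<le> min 2 (cmod D * h) + min 1 (cmod D * h)"
    using cis_part exp_part by (rule add_mono)
  also have "\<dots> \<le> 3 * min 1 (cmod D * h)"
    using Dh(3) by (simp add: min_def mult.commute)
  finally have N: "cmod N \<le> 3 * min 1 (cmod D * h)" .
  have "gker s1 \<tau> \<xi> - gker s2 \<tau> \<xi> = N / D"
    by (simp add: gker_def N_def D_def u_def diff_divide_distrib)
  then show ?thesis
  proof (cases "D = 0")
    case False
    then have "cmod N / cmod D \<le> 3 * min 1 (cmod D * h) / cmod D"
      using N by (simp add: divide_right_mono)
    also have "\<dots> = 3 * min (1 / cmod D) h"
      using False by (simp add: min_def field_simps)
    finally show ?thesis
      using \<open>gker s1 \<tau> \<xi> - gker s2 \<tau> \<xi> = N / D\<close> by (simp add: R h_def norm_divide)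
  qed (simp add: R h_def)
qed

lemma gker_0 [simp]: "gker 0 \<tau> \<xi> = 0"
  by (simp add: gker_def)

lemma norm_gker_le: "0 \<le> s \<Longrightarrow> cmod (gker s \<tau> \<xi>) \<le> 3 * min (1 / heat_symbol \<tau> \<xi>) s"
  using norm_gker_diff_le[of s 0 \<tau> \<xi>] by simp

lemma norm_gker_le_min: "0 \<le> s \<Longrightarrow> s \<le> T \<Longrightarrow> cmod (gker s \<tau> \<xi>) \<le> 3 * min T (1 / heat_symbol \<tau> \<xi>)"
  using norm_gker_le[of s \<tau> \<xi>] by linarith

lemma gker_measurable [measurable]:
  "(\<lambda>z. gker s (fst z) (snd z)) \<in> borel_measurable (borel :: (real \<times> (real ^ 'k::finite)) measure)"
proof -
  have "(\<lambda>z::real \<times> (real ^ 'k). cis (- fst z * s) - complex_of_real (exp (- s * (norm (snd z))\<^sup>2)))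
      \<in> borel_measurable borel"
    by (intro borel_measurable_continuous_onI continuous_intros)
  moreover have "(\<lambda>z::real \<times> (real ^ 'k). complex_of_real ((norm (snd z))\<^sup>2) - \<i> * complex_of_real (fst z))
      \<in> borel_measurable borel"
    by (intro borel_measurable_continuous_onI continuous_intros)
  ultimately show ?thesis
    unfolding gker_def by (rule borel_measurable_divide)
qed

section \<open>Spectral integrals\<close>

definition riesz_weight :: "real \<Rightarrow> 'a::euclidean_space \<Rightarrow> real" where
  "riesz_weight \<beta> \<xi> = norm \<xi> powr (- (real DIM('a) - \<beta>))"

lemma riesz_weight_nonneg [simp]: "0 \<le> riesz_weight \<beta> \<xi>"
  by (simp add: riesz_weight_def)

lemma riesz_weight_0 [simp]: "riesz_weight \<beta> 0 = 0"
  by (simp add: riesz_weight_def)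

lemma nn_integral_pair_le:
  fixes F :: "real \<times> 'a::euclidean_space \<Rightarrow> ennreal"
  assumes [measurable]: "F \<in> borel_measurable borel"
    and inner: "\<And>\<xi>. (\<integral>\<^sup>+\<tau>. F (\<tau>, \<xi>) \<partial>lborel) \<le> G \<xi>"
  shows "(\<integral>\<^sup>+z. F z \<partial>lborel) \<le> (\<integral>\<^sup>+\<xi>. G \<xi> \<partial>lborel)"
proof -
  have "(\<integral>\<^sup>+z. F z \<partial>lborel) = (\<integral>\<^sup>+z. F z \<partial>(lborel \<Otimes>\<^sub>M lborel))"
    by (simp add: lborel_prod)
  also have "\<dots> = (\<integral>\<^sup>+\<xi>. \<integral>\<^sup>+\<tau>. F (\<tau>, \<xi>) \<partial>lborel \<partial>lborel)"
    by (rule lborel_pair.nn_integral_snd[symmetric]) (simp add: lborel_prod)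
  also have "\<dots> \<le> (\<integral>\<^sup>+\<xi>. G \<xi> \<partial>lborel)"
    by (intro nn_integral_mono inner)
  finally show ?thesis .
qed

lemma nn_integral_sq_le:
  assumes A: "0 < A" and m: "\<And>\<tau>. 0 \<le> m \<tau>" "\<And>\<tau>. m \<tau> \<le> 1 / A" "\<And>\<tau>. \<bar>\<tau>\<bar> * m \<tau> \<le> 1"
  shows "(\<integral>\<^sup>+\<tau>. ennreal ((m \<tau>)\<^sup>2) \<partial>lborel) \<le> ennreal (4 / A)"
proof -
  have "(\<integral>\<^sup>+\<tau>. ennreal ((m \<tau>)\<^sup>2) \<partial>lborel) \<le> (\<integral>\<^sup>+\<tau>. ennreal (bump A \<tau>) \<partial>lborel)"
    by (intro nn_integral_mono ennreal_leI sq_le_bump A m)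
  also have "\<dots> \<le> ennreal (4 / A)"
    by (rule nn_integral_bump_le[OF A])
  finally show ?thesis .
qed

lemma nn_integral_min_sq_heat_symbol_le:
  assumes T: "0 < T" and \<xi>: "\<xi> \<noteq> 0"
  shows "(\<integral>\<^sup>+\<tau>. ennreal ((min T (1 / heat_symbol \<tau> \<xi>))\<^sup>2) \<partial>lborel) \<le> ennreal (4 * min T (1 / (norm \<xi>)\<^sup>2))"
proof -
  define A where "A = max (1 / T) ((norm \<xi>)\<^sup>2)"
  have "0 < (norm \<xi>)\<^sup>2"
    using \<xi> by simp
  then have A: "0 < A" "1 / A = min T (1 / (norm \<xi>)\<^sup>2)"
    using T by (auto simp: A_def max_def min_def field_simps)
  have "(\<integral>\<^sup>+\<tau>. ennreal ((min T (1 / heat_symbol \<tau> \<xi>))\<^sup>2) \<partial>lborel) \<le> ennreal (4 / A)"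
  proof (rule nn_integral_sq_le[OF A(1)])
    fix \<tau>
    show "0 \<le> min T (1 / heat_symbol \<tau> \<xi>)"
      using T by simp
    show "min T (1 / heat_symbol \<tau> \<xi>) \<le> 1 / A"
      using inverse_heat_symbol_le[OF \<xi>, of \<tau>] unfolding A(2) by linarith
    show "\<bar>\<tau>\<bar> * min T (1 / heat_symbol \<tau> \<xi>) \<le> 1"
      using abs_mult_inverse_heat_symbol_le[of \<tau> \<xi>] mult_left_mono[of "min T (1 / heat_symbol \<tau> \<xi>)" "1 / heat_symbol \<tau> \<xi>" "\<bar>\<tau>\<bar>"]
      by simp
  qed
  then show ?thesis
    by (simp add: A(2)[symmetric])
qed

lemma norm_powr_riesz_weight_min_le:
  fixes \<xi> :: "'a::euclidean_space" and \<beta> \<gamma> T :: real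
  assumes \<gamma>: "0 \<le> \<gamma>" and T: "0 < T"
  shows "norm \<xi> powr \<gamma> * riesz_weight \<beta> \<xi> * min T (1 / (norm \<xi>)\<^sup>2)
    \<le> T * (norm \<xi> powr (- (real DIM('a) - \<beta>)) * indicator {x. norm x \<le> 1} \<xi>)
      + norm \<xi> powr (- (real DIM('a) - \<beta> - \<gamma> + 2)) * indicator {x. 1 \<le> norm x} \<xi>"
proof (cases "norm \<xi> \<le> 1")
  case True
  have "norm \<xi> powr \<gamma> * riesz_weight \<beta> \<xi> \<le> 1 * norm \<xi> powr (- (real DIM('a) - \<beta>))"
    unfolding riesz_weight_def using True \<gamma> by (intro mult_right_mono powr_le1) auto
  then have "norm \<xi> powr \<gamma> * riesz_weight \<beta> \<xi> * min T (1 / (norm \<xi>)\<^sup>2) \<le> norm \<xi> powr (- (real DIM('a) - \<beta>)) * T"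
    using T by (intro mult_mono) auto
  then show ?thesis
    using True by (simp add: mult.commute add_increasing2)
next
  case False
  then have "1 / (norm \<xi>)\<^sup>2 = norm \<xi> powr (-2)"
    by (simp add: powr_minus_divide powr_numeral)
  then have "norm \<xi> powr \<gamma> * riesz_weight \<beta> \<xi> * (1 / (norm \<xi>)\<^sup>2) = norm \<xi> powr (- (real DIM('a) - \<beta> - \<gamma> + 2))"
    using False by (simp add: riesz_weight_def powr_add[symmetric] algebra_simps)
  moreover have "norm \<xi> powr \<gamma> * riesz_weight \<beta> \<xi> * min T (1 / (norm \<xi>)\<^sup>2)
      \<le> norm \<xi> powr \<gamma> * riesz_weight \<beta> \<xi> * (1 / (norm \<xi>)\<^sup>2)"
    by (intro mult_left_mono) auto
  ultimately show ?thesis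
    using False by simp
qed

lemma nn_integral_spatial_kernel_finite:
  fixes T \<beta> \<gamma> :: real
  assumes T: "0 < T" and \<beta>: "0 < \<beta>" "\<beta> \<le> DIM('a::euclidean_space)" and \<gamma>: "0 \<le> \<gamma>" "\<gamma> < 2 - \<beta>"
  shows "(\<integral>\<^sup>+z. ennreal (norm (snd z) powr \<gamma> * (min T (1 / heat_symbol (fst z) (snd z)))\<^sup>2 * riesz_weight \<beta> (snd z))
           \<partial>(lborel :: (real \<times> 'a) measure)) < \<infinity>"
proof -
  define f0 where "f0 \<xi> = norm \<xi> powr (- (real DIM('a) - \<beta>)) * indicator {x. norm x \<le> 1} \<xi>" for \<xi> :: 'a
  define f1 where "f1 \<xi> = norm \<xi> powr (- (real DIM('a) - \<beta> - \<gamma> + 2)) * indicator {x. 1 \<le> norm x} \<xi>" for \<xi> :: 'a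
  have [measurable]: "f0 \<in> borel_measurable borel" "f1 \<in> borel_measurable borel"
    unfolding f0_def f1_def by measurable
  have "(\<integral>\<^sup>+z. ennreal (norm (snd z) powr \<gamma> * (min T (1 / heat_symbol (fst z) (snd z)))\<^sup>2 * riesz_weight \<beta> (snd z))
           \<partial>(lborel :: (real \<times> 'a) measure))
      \<le> (\<integral>\<^sup>+\<xi>. 4 * (ennreal T * ennreal (f0 \<xi>) + ennreal (f1 \<xi>)) \<partial>lborel)"
  proof (rule nn_integral_pair_le)
    fix \<xi> :: 'a
    show "(\<integral>\<^sup>+\<tau>. ennreal (norm (snd (\<tau>, \<xi>)) powr \<gamma> * (min T (1 / heat_symbol (fst (\<tau>, \<xi>)) (snd (\<tau>, \<xi>))))\<^sup>2
          * riesz_weight \<beta> (snd (\<tau>, \<xi>))) \<partial>lborel) \<le> 4 * (ennreal T * ennreal (f0 \<xi>) + ennreal (f1 \<xi>))"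
    proof (cases "\<xi> = 0")
      case False
      have "(\<integral>\<^sup>+\<tau>. ennreal (norm \<xi> powr \<gamma> * (min T (1 / heat_symbol \<tau> \<xi>))\<^sup>2 * riesz_weight \<beta> \<xi>) \<partial>lborel)
          = ennreal (norm \<xi> powr \<gamma> * riesz_weight \<beta> \<xi>) * (\<integral>\<^sup>+\<tau>. ennreal ((min T (1 / heat_symbol \<tau> \<xi>))\<^sup>2) \<partial>lborel)"
        by (subst nn_integral_cmult[symmetric]) (auto simp: ennreal_mult'[symmetric] mult_ac)
      also have "\<dots> \<le> ennreal (norm \<xi> powr \<gamma> * riesz_weight \<beta> \<xi>) * ennreal (4 * min T (1 / (norm \<xi>)\<^sup>2))"
        by (intro mult_left_mono nn_integral_min_sq_heat_symbol_le T False) simp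
      also have "\<dots> = ennreal (4 * (norm \<xi> powr \<gamma> * riesz_weight \<beta> \<xi> * min T (1 / (norm \<xi>)\<^sup>2)))"
        using T by (simp add: ennreal_mult[symmetric] mult_ac)
      also have "\<dots> \<le> ennreal (4 * (T * f0 \<xi> + f1 \<xi>))"
        unfolding f0_def f1_def
        by (intro ennreal_leI mult_left_mono norm_powr_riesz_weight_min_le \<gamma>(1) T) simp
      also have "\<dots> = 4 * (ennreal T * ennreal (f0 \<xi>) + ennreal (f1 \<xi>))"
        using T by (simp add: f0_def f1_def ennreal_mult)
      finally show ?thesis
        by simp
    qed simp
  qed (unfold riesz_weight_def, measurable)
  also have "\<dots> = 4 * (ennreal T * (\<integral>\<^sup>+\<xi>. ennreal (f0 \<xi>) \<partial>lborel) + (\<integral>\<^sup>+\<xi>. ennreal (f1 \<xi>) \<partial>lborel))"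
    by (simp add: nn_integral_add nn_integral_cmult)
  also have "\<dots> < \<infinity>"
  proof -
    obtain C0 where "\<And>r. 0 < r \<Longrightarrow> (\<integral>\<^sup>+x. ennreal (norm (x::'a) powr (- (real DIM('a) - \<beta>)) * indicator {x. norm x \<le> r} x) \<partial>lborel)
        \<le> ennreal (C0 * r powr (DIM('a) - (DIM('a) - \<beta>)))"
      by (rule nn_integral_norm_powr_ball_le[where 'a='a, of "real DIM('a) - \<beta>"]) (use \<beta> in auto)
    from this[of 1] have "(\<integral>\<^sup>+\<xi>. ennreal (f0 \<xi>) \<partial>lborel) < \<infinity>"
      unfolding f0_def using ennreal_less_top le_less_trans by fastforce
    moreover obtain C1 where "\<And>r. 0 < r \<Longrightarrow> (\<integral>\<^sup>+x. ennreal (norm (x::'a) powr (- (real DIM('a) - \<beta> - \<gamma> + 2)) * indicator {x. r \<le> norm x} x) \<partial>lborel)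
        \<le> ennreal (C1 * r powr (DIM('a) - (DIM('a) - \<beta> - \<gamma> + 2)))"
      by (rule nn_integral_norm_powr_outside_ball_le[where 'a='a, of "real DIM('a) - \<beta> - \<gamma> + 2"]) (use \<gamma> in auto)
    from this[of 1] have "(\<integral>\<^sup>+\<xi>. ennreal (f1 \<xi>) \<partial>lborel) < \<infinity>"
      unfolding f1_def using ennreal_less_top le_less_trans by fastforce
    ultimately show ?thesis
      by (simp add: ennreal_mult_less_top)
  qed
  finally show ?thesis .
qed

lemma nn_integral_inverse_heat_symbol_sq_le:
  assumes "\<xi> \<noteq> 0"
  shows "(\<integral>\<^sup>+\<tau>. ennreal ((1 / heat_symbol \<tau> \<xi>)\<^sup>2) \<partial>lborel) \<le> ennreal (4 / (norm \<xi>)\<^sup>2)"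
  by (rule nn_integral_sq_le)
    (use assms inverse_heat_symbol_le abs_mult_inverse_heat_symbol_le in auto)

lemma min_inverse_heat_symbol_mult_le:
  assumes h: "0 < h" and \<xi>: "\<xi> \<noteq> 0" and \<tau>: "\<tau> \<noteq> 0" and \<theta>: "0 < \<theta>" "\<theta> < 1"
  shows "min (1 / heat_symbol \<tau> \<xi>) h * (1 / heat_symbol \<tau> \<xi>)
    \<le> h * norm \<xi> powr (-2 * \<theta>) * (if \<bar>\<tau>\<bar> \<le> 1 / h then \<bar>\<tau>\<bar> powr (\<theta> - 1) else 0) + bump (1 / h) \<tau>"
proof (cases "\<bar>\<tau>\<bar> \<le> 1 / h")
  case True
  have "min (1 / heat_symbol \<tau> \<xi>) h * (1 / heat_symbol \<tau> \<xi>) \<le> h * (1 / heat_symbol \<tau> \<xi>)"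
    by (intro mult_right_mono) auto
  also have "\<dots> \<le> h * (norm \<xi> powr (-2 * \<theta>) * \<bar>\<tau>\<bar> powr (\<theta> - 1))"
    using inverse_heat_symbol_le_interpolation[OF \<xi> \<tau> \<theta>] h by (intro mult_left_mono) auto
  finally show ?thesis
    using True bump_nonneg[of "1 / h" \<tau>] by (simp add: mult.assoc add_increasing2)
next
  case False
  have "min (1 / heat_symbol \<tau> \<xi>) h * (1 / heat_symbol \<tau> \<xi>) \<le> (1 / heat_symbol \<tau> \<xi>)\<^sup>2"
    unfolding power2_eq_square by (intro mult_right_mono) auto
  also have "\<dots> \<le> bump (1 / h) \<tau>"
  proof (rule sq_le_bump)
    have "1 / h * (1 / heat_symbol \<tau> \<xi>) \<le> \<bar>\<tau>\<bar> * (1 / heat_symbol \<tau> \<xi>)"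
      using False by (intro mult_right_mono) auto
    then have "1 / h * (1 / heat_symbol \<tau> \<xi>) \<le> 1 / h * h"
      using abs_mult_inverse_heat_symbol_le[of \<tau> \<xi>] h by simp
    then show "1 / heat_symbol \<tau> \<xi> \<le> 1 / (1 / h)"
      using h by (simp only: mult_le_cancel_left_pos zero_less_divide_1_iff) simp
  qed (use h abs_mult_inverse_heat_symbol_le in auto)
  finally show ?thesis
    using False by simp
qed

lemma nn_integral_min_heat_symbol_le:
  assumes h: "0 < h" and \<xi>: "\<xi> \<noteq> 0" and \<theta>: "0 < \<theta>" "\<theta> < 1"
  shows "(\<integral>\<^sup>+\<tau>. ennreal (min (1 / heat_symbol \<tau> \<xi>) h * (1 / heat_symbol \<tau> \<xi>)) \<partial>lborel)
     \<le> ennreal (2 * h powr (1 - \<theta>) * norm \<xi> powr (-2 * \<theta>) / \<theta> + 4 * h)"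
proof -
  define L where "L = 1 / h"
  have L: "0 < L"
    using h by (simp add: L_def)
  define P where "P \<tau> = (if \<bar>\<tau>\<bar> \<le> L then \<bar>\<tau>\<bar> powr (\<theta> - 1) else 0)" for \<tau> :: real
  have [measurable]: "P \<in> borel_measurable borel"
    unfolding P_def by measurable
  define c where "c = h * norm \<xi> powr (-2 * \<theta>)"
  have c: "0 \<le> c"
    using h by (simp add: c_def)
  have "AE \<tau> in lborel. ennreal (min (1 / heat_symbol \<tau> \<xi>) h * (1 / heat_symbol \<tau> \<xi>))
      \<le> ennreal c * ennreal (P \<tau>) + ennreal (bump L \<tau>)"
    using AE_lborel_singleton[of 0]
  proof (rule eventually_mono)
    fix \<tau> :: real
    assume "\<tau> \<noteq> 0"
    have "0 \<le> P \<tau>"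
      by (simp add: P_def)
    then have "ennreal c * ennreal (P \<tau>) + ennreal (bump L \<tau>) = ennreal (c * P \<tau> + bump L \<tau>)"
      using c bump_nonneg[of L \<tau>] by (simp add: ennreal_mult)
    then show "ennreal (min (1 / heat_symbol \<tau> \<xi>) h * (1 / heat_symbol \<tau> \<xi>))
        \<le> ennreal c * ennreal (P \<tau>) + ennreal (bump L \<tau>)"
      using min_inverse_heat_symbol_mult_le[OF h \<xi> \<open>\<tau> \<noteq> 0\<close> \<theta>]
      by (simp add: ennreal_leI c_def P_def L_def)
  qed
  then have "(\<integral>\<^sup>+\<tau>. ennreal (min (1 / heat_symbol \<tau> \<xi>) h * (1 / heat_symbol \<tau> \<xi>)) \<partial>lborel)
      \<le> (\<integral>\<^sup>+\<tau>. ennreal c * ennreal (P \<tau>) + ennreal (bump L \<tau>) \<partial>lborel)"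
    by (rule nn_integral_mono_AE)
  also have "\<dots> = ennreal c * (\<integral>\<^sup>+\<tau>. ennreal (P \<tau>) \<partial>lborel) + (\<integral>\<^sup>+\<tau>. ennreal (bump L \<tau>) \<partial>lborel)"
    by (subst nn_integral_add) (auto simp: nn_integral_cmult bump_def)
  also have "\<dots> \<le> ennreal c * ennreal (2 * L powr \<theta> / \<theta>) + ennreal (4 / L)"
    using nn_integral_abs_powr_le[OF L \<theta>(1)] nn_integral_bump_le[OF L]
    unfolding P_def by (intro add_mono mult_left_mono) auto
  also have "\<dots> = ennreal (2 * h powr (1 - \<theta>) * norm \<xi> powr (-2 * \<theta>) / \<theta> + 4 * h)"
  proof -
    have "c * (2 * L powr \<theta> / \<theta>) = 2 * h powr (1 - \<theta>) * norm \<xi> powr (-2 * \<theta>) / \<theta>"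
      using h by (simp add: c_def L_def powr_divide powr_diff)
    then show ?thesis
      using c L \<theta> by (simp add: L_def ennreal_mult[symmetric] ennreal_plus[symmetric] del: ennreal_plus)
  qed
  finally show ?thesis .
qed

lemma nn_integral_temporal_inner_le:
  assumes h: "0 < h" and \<theta>: "0 < \<theta>" "\<theta> < 1"
  shows "(\<integral>\<^sup>+\<tau>. ennreal (min (1 / heat_symbol \<tau> \<xi>) h * (1 / heat_symbol \<tau> \<xi>) * riesz_weight \<beta> \<xi>) \<partial>lborel)
     \<le> ennreal (riesz_weight \<beta> \<xi> * (if h powr (-1/2) \<le> norm \<xi> then 4 * norm \<xi> powr (-2)
                 else 2 * h powr (1 - \<theta>) * norm \<xi> powr (-2 * \<theta>) / \<theta> + 4 * h))"
proof (cases "\<xi> = 0")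
  case False
  have "(\<integral>\<^sup>+\<tau>. ennreal (min (1 / heat_symbol \<tau> \<xi>) h * (1 / heat_symbol \<tau> \<xi>) * riesz_weight \<beta> \<xi>) \<partial>lborel)
      = ennreal (riesz_weight \<beta> \<xi>) * (\<integral>\<^sup>+\<tau>. ennreal (min (1 / heat_symbol \<tau> \<xi>) h * (1 / heat_symbol \<tau> \<xi>)) \<partial>lborel)"
    by (subst nn_integral_cmult[symmetric]) (auto simp: ennreal_mult'[symmetric] mult_ac)
  also have "(\<integral>\<^sup>+\<tau>. ennreal (min (1 / heat_symbol \<tau> \<xi>) h * (1 / heat_symbol \<tau> \<xi>)) \<partial>lborel)
      \<le> ennreal (if h powr (-1/2) \<le> norm \<xi> then 4 * norm \<xi> powr (-2)
                 else 2 * h powr (1 - \<theta>) * norm \<xi> powr (-2 * \<theta>) / \<theta> + 4 * h)"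
  proof (cases "h powr (-1/2) \<le> norm \<xi>")
    case True
    have "(\<integral>\<^sup>+\<tau>. ennreal (min (1 / heat_symbol \<tau> \<xi>) h * (1 / heat_symbol \<tau> \<xi>)) \<partial>lborel)
        \<le> (\<integral>\<^sup>+\<tau>. ennreal ((1 / heat_symbol \<tau> \<xi>)\<^sup>2) \<partial>lborel)"
      unfolding power2_eq_square by (intro nn_integral_mono ennreal_leI mult_right_mono) auto
    also have "\<dots> \<le> ennreal (4 / (norm \<xi>)\<^sup>2)"
      by (rule nn_integral_inverse_heat_symbol_sq_le[OF False])
    finally show ?thesis
      using True False by (simp add: powr_minus_divide powr_numeral)
  qed (use nn_integral_min_heat_symbol_le[OF h False \<theta>] in simp)
  finally show ?thesis
    using h by (simp add: ennreal_mult'[symmetric] mult_left_mono)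
qed simp

lemma riesz_weight_temporal_bound_le:
  fixes \<xi> :: "'a::euclidean_space" and \<beta> \<theta> h :: real
  assumes h: "0 < h" and \<theta>: "0 < \<theta>"
  defines "r \<equiv> h powr (-1/2)"
  shows "riesz_weight \<beta> \<xi> * (if r \<le> norm \<xi> then 4 * norm \<xi> powr (-2)
                 else 2 * h powr (1 - \<theta>) * norm \<xi> powr (-2 * \<theta>) / \<theta> + 4 * h)
    \<le> 4 * (norm \<xi> powr (- (real DIM('a) - \<beta> + 2)) * indicator {x. r \<le> norm x} \<xi>)
      + 2 * h powr (1 - \<theta>) / \<theta> * (norm \<xi> powr (- (real DIM('a) - \<beta> + 2 * \<theta>)) * indicator {x. norm x \<le> r} \<xi>)
      + 4 * h * (norm \<xi> powr (- (real DIM('a) - \<beta>)) * indicator {x. norm x \<le> r} \<xi>)"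
proof (cases "r \<le> norm \<xi>")
  case True
  then show ?thesis
    using h \<theta> by (simp add: riesz_weight_def powr_add[symmetric] add_increasing2)
next
  case False
  then show ?thesis
    by (simp add: riesz_weight_def powr_add[symmetric] algebra_simps)
qed

lemma powr_temporal_scaling:
  fixes h \<beta> \<theta> :: real
  assumes h: "0 < h"
  defines "r \<equiv> h powr (-1/2)"
  shows "4 * A * r powr (\<beta> - 2) + B * (2 * h powr (1 - \<theta>) / \<theta> * r powr (\<beta> - 2 * \<theta>)) + 4 * D * (h * r powr \<beta>)
    = (4 * A + 2 * B / \<theta> + 4 * D) * h powr ((2 - \<beta>) / 2)"
proof -
  have r: "r powr e = h powr (- e / 2)" for e
    unfolding r_def by (simp add: powr_powr)
  have "h powr (1 - \<theta>) * r powr (\<beta> - 2 * \<theta>) = h powr (1 - \<theta> + - (\<beta> - 2 * \<theta>) / 2)"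
    by (simp add: r powr_add)
  also have "1 - \<theta> + - (\<beta> - 2 * \<theta>) / 2 = (2 - \<beta>) / 2"
    by (simp add: field_simps)
  finally have "h powr (1 - \<theta>) * r powr (\<beta> - 2 * \<theta>) = h powr ((2 - \<beta>) / 2)" .
  then have "2 * h powr (1 - \<theta>) / \<theta> * r powr (\<beta> - 2 * \<theta>) = 2 / \<theta> * h powr ((2 - \<beta>) / 2)"
    by (metis mult.assoc times_divide_eq_left times_divide_eq_right)
  moreover have "h * r powr \<beta> = h powr ((2 - \<beta>) / 2)"
  proof -
    have "h * r powr \<beta> = h powr 1 * h powr (- \<beta> / 2)"
      using h by (simp add: r)
    also have "\<dots> = h powr (1 + - \<beta> / 2)"
      by (rule powr_add[symmetric])
    also have "1 + - \<beta> / 2 = (2 - \<beta>) / 2"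
      by simp
    finally show ?thesis .
  qed
  moreover have "r powr (\<beta> - 2) = h powr ((2 - \<beta>) / 2)"
    by (simp add: r field_simps)
  ultimately show ?thesis
    by (simp only:) (simp add: algebra_simps)
qed

lemma nn_integral_temporal_kernel_le_radial:
  fixes \<beta> \<theta> h :: real
  assumes h: "0 < h" and \<theta>: "0 < \<theta>" "\<theta> < 1"
  defines "r \<equiv> h powr (-1/2)" and "n \<equiv> real DIM('a::euclidean_space)"
  shows "(\<integral>\<^sup>+z. ennreal (min (1 / heat_symbol (fst z) (snd z)) h * (1 / heat_symbol (fst z) (snd z)) * riesz_weight \<beta> (snd z))
         \<partial>(lborel :: (real \<times> 'a) measure))
    \<le> 4 * (\<integral>\<^sup>+\<xi>. ennreal (norm (\<xi>::'a) powr (- (n - \<beta> + 2)) * indicator {x. r \<le> norm x} \<xi>) \<partial>lborel)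
      + ennreal (2 * h powr (1 - \<theta>) / \<theta>)
        * (\<integral>\<^sup>+\<xi>. ennreal (norm (\<xi>::'a) powr (- (n - \<beta> + 2 * \<theta>)) * indicator {x. norm x \<le> r} \<xi>) \<partial>lborel)
      + ennreal (4 * h) * (\<integral>\<^sup>+\<xi>. ennreal (norm (\<xi>::'a) powr (- (n - \<beta>)) * indicator {x. norm x \<le> r} \<xi>) \<partial>lborel)"
proof -
  define c where "c = 2 * h powr (1 - \<theta>) / \<theta>"
  have c: "0 \<le> c"
    using \<theta> by (simp add: c_def)
  define fL where "fL \<xi> = norm \<xi> powr (- (n - \<beta> + 2)) * indicator {x. r \<le> norm x} \<xi>" for \<xi> :: 'a
  define f1 where "f1 \<xi> = norm \<xi> powr (- (n - \<beta> + 2 * \<theta>)) * indicator {x. norm x \<le> r} \<xi>" for \<xi> :: 'a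
  define f0 where "f0 \<xi> = norm \<xi> powr (- (n - \<beta>)) * indicator {x. norm x \<le> r} \<xi>" for \<xi> :: 'a
  have [measurable]: "fL \<in> borel_measurable borel" "f1 \<in> borel_measurable borel" "f0 \<in> borel_measurable borel"
    unfolding fL_def f1_def f0_def by measurable
  have "(\<integral>\<^sup>+z. ennreal (min (1 / heat_symbol (fst z) (snd z)) h * (1 / heat_symbol (fst z) (snd z)) * riesz_weight \<beta> (snd z))
       \<partial>(lborel :: (real \<times> 'a) measure))
    \<le> (\<integral>\<^sup>+\<xi>. 4 * ennreal (fL \<xi>) + ennreal c * ennreal (f1 \<xi>) + ennreal (4 * h) * ennreal (f0 \<xi>) \<partial>lborel)"
  proof (rule nn_integral_pair_le)
    fix \<xi> :: 'a
    have "ennreal (riesz_weight \<beta> \<xi> * (if h powr (-1/2) \<le> norm \<xi> then 4 * norm \<xi> powr (-2)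
               else 2 * h powr (1 - \<theta>) * norm \<xi> powr (-2 * \<theta>) / \<theta> + 4 * h))
        \<le> ennreal (4 * fL \<xi> + c * f1 \<xi> + 4 * h * f0 \<xi>)"
      using riesz_weight_temporal_bound_le[OF h \<theta>(1), of \<beta> \<xi>]
      by (intro ennreal_leI) (simp add: fL_def f1_def f0_def c_def r_def n_def)
    also have "\<dots> = 4 * ennreal (fL \<xi>) + ennreal c * ennreal (f1 \<xi>) + ennreal (4 * h) * ennreal (f0 \<xi>)"
      using h c by (simp add: fL_def f1_def f0_def ennreal_mult)
    finally show "(\<integral>\<^sup>+\<tau>. ennreal (min (1 / heat_symbol (fst (\<tau>, \<xi>)) (snd (\<tau>, \<xi>))) h
        * (1 / heat_symbol (fst (\<tau>, \<xi>)) (snd (\<tau>, \<xi>))) * riesz_weight \<beta> (snd (\<tau>, \<xi>))) \<partial>lborel)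
      \<le> 4 * ennreal (fL \<xi>) + ennreal c * ennreal (f1 \<xi>) + ennreal (4 * h) * ennreal (f0 \<xi>)"
      using nn_integral_temporal_inner_le[OF h \<theta>, of \<xi> \<beta>] by simp
  qed (unfold riesz_weight_def, measurable)
  also have "\<dots> = 4 * (\<integral>\<^sup>+\<xi>. ennreal (fL \<xi>) \<partial>lborel) + ennreal c * (\<integral>\<^sup>+\<xi>. ennreal (f1 \<xi>) \<partial>lborel)
      + ennreal (4 * h) * (\<integral>\<^sup>+\<xi>. ennreal (f0 \<xi>) \<partial>lborel)"
    by (simp add: nn_integral_add nn_integral_cmult)
  finally show ?thesis
    by (simp only: fL_def f1_def f0_def c_def)
qed

lemma nn_integral_temporal_kernel_le:
  fixes \<beta> :: real
  assumes \<beta>: "0 < \<beta>" "\<beta> \<le> DIM('a::euclidean_space)" "\<beta> < 2"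
  obtains K where "0 \<le> K" "\<And>h. 0 < h \<Longrightarrow>
      (\<integral>\<^sup>+z. ennreal (min (1 / heat_symbol (fst z) (snd z)) h * (1 / heat_symbol (fst z) (snd z)) * riesz_weight \<beta> (snd z))
         \<partial>(lborel :: (real \<times> 'a) measure)) \<le> ennreal (K * h powr ((2 - \<beta>) / 2))"
proof -
  define n where "n = real DIM('a)"
  \<comment> \<open>Any \<open>\<theta> \<in> (0, 1)\<close> with \<open>2 \<theta> < \<beta>\<close> keeps the weight of the low frequencies integrable at the origin.\<close>
  define \<theta> where "\<theta> = \<beta> / 4"
  have \<theta>: "0 < \<theta>" "\<theta> < 1"
    using \<beta> by (auto simp: \<theta>_def)
  obtain CL where CL: "0 \<le> CL" "\<And>r. 0 < r \<Longrightarrow> (\<integral>\<^sup>+\<xi>. ennreal (norm (\<xi>::'a) powr (- (n - \<beta> + 2))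
      * indicator {x. r \<le> norm x} \<xi>) \<partial>lborel) \<le> ennreal (CL * r powr (\<beta> - 2))"
    by (rule nn_integral_norm_powr_outside_ball_le[where 'a='a, of "n - \<beta> + 2"]) (use \<beta> in \<open>auto simp: n_def\<close>)
  obtain C1 where C1: "0 \<le> C1" "\<And>r. 0 < r \<Longrightarrow> (\<integral>\<^sup>+\<xi>. ennreal (norm (\<xi>::'a) powr (- (n - \<beta> + 2 * \<theta>))
      * indicator {x. norm x \<le> r} \<xi>) \<partial>lborel) \<le> ennreal (C1 * r powr (\<beta> - 2 * \<theta>))"
    by (rule nn_integral_norm_powr_ball_le[where 'a='a, of "n - \<beta> + 2 * \<theta>"]) (use \<beta> in \<open>auto simp: \<theta>_def n_def\<close>)
  obtain C0 where C0: "0 \<le> C0" "\<And>r. 0 < r \<Longrightarrow> (\<integral>\<^sup>+\<xi>. ennreal (norm (\<xi>::'a) powr (- (n - \<beta>))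
      * indicator {x. norm x \<le> r} \<xi>) \<partial>lborel) \<le> ennreal (C0 * r powr \<beta>)"
    by (rule nn_integral_norm_powr_ball_le[where 'a='a, of "n - \<beta>"]) (use \<beta> in \<open>auto simp: n_def\<close>)
  show thesis
  proof
    show "0 \<le> 4 * CL + 2 * C1 / \<theta> + 4 * C0"
      using CL C1 C0 \<theta> by simp
    fix h :: real
    assume h: "0 < h"
    define r where "r = h powr (-1/2)"
    define c where "c = 2 * h powr (1 - \<theta>) / \<theta>"
    have r: "0 < r" and c: "0 \<le> c"
      using h \<theta> by (simp_all add: r_def c_def)
    have "(\<integral>\<^sup>+z. ennreal (min (1 / heat_symbol (fst z) (snd z)) h * (1 / heat_symbol (fst z) (snd z))
        * riesz_weight \<beta> (snd z)) \<partial>(lborel :: (real \<times> 'a) measure))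
      \<le> 4 * ennreal (CL * r powr (\<beta> - 2)) + ennreal c * ennreal (C1 * r powr (\<beta> - 2 * \<theta>))
        + ennreal (4 * h) * ennreal (C0 * r powr \<beta>)"
      using nn_integral_temporal_kernel_le_radial[OF h \<theta>, of \<beta>, where 'a='a] CL(2)[OF r] C1(2)[OF r] C0(2)[OF r]
      unfolding r_def[symmetric] c_def[symmetric] n_def[symmetric]
      by (elim order_trans) (intro add_mono mult_left_mono; simp)
    also have "\<dots> = ennreal (4 * CL * r powr (\<beta> - 2) + C1 * (c * r powr (\<beta> - 2 * \<theta>)) + 4 * C0 * (h * r powr \<beta>))"
      using CL(1) C1(1) C0(1) c h by (simp add: ennreal_mult ac_simps)
    also have "\<dots> = ennreal ((4 * CL + 2 * C1 / \<theta> + 4 * C0) * h powr ((2 - \<beta>) / 2))"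
      unfolding r_def c_def by (subst powr_temporal_scaling[OF h]) simp
    finally show "(\<integral>\<^sup>+z. ennreal (min (1 / heat_symbol (fst z) (snd z)) h * (1 / heat_symbol (fst z) (snd z))
        * riesz_weight \<beta> (snd z)) \<partial>(lborel :: (real \<times> 'a) measure))
      \<le> ennreal ((4 * CL + 2 * C1 / \<theta> + 4 * C0) * h powr ((2 - \<beta>) / 2))" .
  qed
qed

section \<open>The covariance\<close>

definition cov_integrand :: "real \<Rightarrow> 'k::finite pt \<Rightarrow> 'k pt \<Rightarrow> real \<times> (real ^ 'k) \<Rightarrow> complex" where
  "cov_integrand \<beta> p q z = cis (- (snd z \<bullet> (snd p - snd q))) * gker (fst p) (fst z) (snd z)
     * cnj (gker (fst q) (fst z) (snd z)) * complex_of_real (riesz_weight \<beta> (snd z))"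

lemma vcov_eq_integral: "vcov \<beta> p q = Re (integral\<^sup>L lborel (cov_integrand \<beta> p q))"
  unfolding vcov_def cov_integrand_def riesz_weight_def by (simp add: case_prod_beta')

lemma cov_integrand_measurable [measurable]: "cov_integrand \<beta> p q \<in> borel_measurable borel"
proof -
  have [measurable]: "cnj \<in> borel_measurable borel" "cis \<in> borel_measurable borel"
    by (intro borel_measurable_continuous_onI continuous_intros)+
  show ?thesis
    unfolding cov_integrand_def[abs_def] riesz_weight_def by measurable
qed

text \<open>The factor \<open>norm (snd z) powr 0\<close> is the indicator of \<open>snd z \<noteq> 0\<close> (as \<open>0 powr 0 = 0\<close>); it makes
  the bound an instance of the spatial kernel with exponent \<open>0\<close>.\<close>

lemma norm_cov_integrand_le:
  assumes "0 \<le> fst p" "fst p \<le> T" "0 \<le> fst q" "fst q \<le> T"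
  shows "norm (cov_integrand \<beta> p q z)
    \<le> 9 * (norm (snd z) powr 0 * (min T (1 / heat_symbol (fst z) (snd z)))\<^sup>2 * riesz_weight \<beta> (snd z))"
proof (cases "snd z = 0")
  case False
  have "norm (cov_integrand \<beta> p q z)
      = cmod (gker (fst p) (fst z) (snd z)) * cmod (gker (fst q) (fst z) (snd z)) * riesz_weight \<beta> (snd z)"
    by (simp add: cov_integrand_def norm_mult)
  also have "\<dots> \<le> (3 * min T (1 / heat_symbol (fst z) (snd z))) * (3 * min T (1 / heat_symbol (fst z) (snd z)))
      * riesz_weight \<beta> (snd z)"
    using assms by (intro mult_mono norm_gker_le_min) auto
  finally show ?thesis
    using False by (simp add: power2_eq_square mult_ac)
qed (simp add: cov_integrand_def)

lemma cov_integrand_integrable: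
  fixes p q :: "'k::finite pt" and \<beta> :: real
  assumes "0 \<le> fst p" "fst p \<le> T" "0 \<le> fst q" "fst q \<le> T" and T: "0 < T"
    and \<beta>: "0 < \<beta>" "\<beta> \<le> CARD('k)" "\<beta> < 2"
  shows "integrable lborel (cov_integrand \<beta> p q)"
proof (rule integrableI_bounded)
  have "(\<integral>\<^sup>+z. ennreal (norm (cov_integrand \<beta> p q z)) \<partial>lborel)
      \<le> (\<integral>\<^sup>+z. 9 * ennreal (norm (snd z) powr 0 * (min T (1 / heat_symbol (fst z) (snd z)))\<^sup>2 * riesz_weight \<beta> (snd z))
          \<partial>(lborel :: (real \<times> (real ^ 'k)) measure))"
  proof (rule nn_integral_mono)
    fix z :: "real \<times> (real ^ 'k)"
    have "ennreal (norm (cov_integrand \<beta> p q z))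
        \<le> ennreal (9 * (norm (snd z) powr 0 * (min T (1 / heat_symbol (fst z) (snd z)))\<^sup>2 * riesz_weight \<beta> (snd z)))"
      using assms by (intro ennreal_leI norm_cov_integrand_le) auto
    then show "ennreal (norm (cov_integrand \<beta> p q z))
        \<le> 9 * ennreal (norm (snd z) powr 0 * (min T (1 / heat_symbol (fst z) (snd z)))\<^sup>2 * riesz_weight \<beta> (snd z))"
      by (simp add: ennreal_mult')
  qed
  also have "\<dots> < \<infinity>"
    using nn_integral_spatial_kernel_finite[OF T, of \<beta> 0, where 'a="real ^ 'k"] \<beta>
    by (simp add: nn_integral_cmult riesz_weight_def ennreal_mult_less_top)
  finally show "(\<integral>\<^sup>+z. ennreal (norm (cov_integrand \<beta> p q z)) \<partial>lborel) < \<infinity>" .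
qed simp

lemma norm_cov_integrand_diff_le:
  fixes y1 y2 x :: "real ^ 'k::finite" and s1 s2 t \<beta> \<delta> T :: real
  assumes s: "0 \<le> s1" "s1 \<le> T" "0 \<le> s2" "s2 \<le> T" "0 \<le> t" "t \<le> T" and \<delta>: "0 < \<delta>" "\<delta> \<le> 1"
  shows "norm (cov_integrand \<beta> (s1, y1) (t, x) z - cov_integrand \<beta> (s2, y2) (t, x) z)
     \<le> 18 * norm (y1 - y2) powr \<delta> * (norm (snd z) powr \<delta> * (min T (1 / heat_symbol (fst z) (snd z)))\<^sup>2 * riesz_weight \<beta> (snd z))
       + 9 * (min (1 / heat_symbol (fst z) (snd z)) \<bar>s1 - s2\<bar> * (1 / heat_symbol (fst z) (snd z)) * riesz_weight \<beta> (snd z))"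
proof -
  obtain \<tau> \<xi> where z: "z = (\<tau>, \<xi>)"
    by (cases z)
  define e1 where "e1 = cis (- (\<xi> \<bullet> (y1 - x)))"
  define e2 where "e2 = cis (- (\<xi> \<bullet> (y2 - x)))"
  define g1 where "g1 = gker s1 \<tau> \<xi>"
  define g2 where "g2 = gker s2 \<tau> \<xi>"
  define w where "w = riesz_weight \<beta> \<xi>"
  define R where "R = heat_symbol \<tau> \<xi>"
  define m where "m = min T (1 / R)"
  define \<mu> where "\<mu> = min (1 / R) \<bar>s1 - s2\<bar>"
  define X where "X = norm \<xi> powr \<delta> * norm (y1 - y2) powr \<delta>"
  have nonneg: "0 \<le> m" "0 \<le> \<mu>" "0 \<le> w" "0 \<le> X"
    using s by (auto simp: m_def \<mu>_def w_def R_def X_def)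
  have e: "norm (e1 - e2) \<le> 2 * X"
    unfolding e1_def e2_def X_def using norm_cis_inner_diff_le[OF \<delta>] by (simp add: powr_mult)
  have g1: "norm g1 \<le> 3 * m" and gt: "norm (gker t \<tau> \<xi>) \<le> 3 * m"
    unfolding g1_def m_def R_def using s by (auto intro: norm_gker_le_min)
  have g12: "norm (g1 - g2) \<le> 3 * \<mu>"
    unfolding g1_def g2_def \<mu>_def R_def using s by (intro norm_gker_diff_le) auto
  have "norm (e1 * g1 - e2 * g2) = norm ((e1 - e2) * g1 + e2 * (g1 - g2))"
    by (simp add: algebra_simps)
  also have "\<dots> \<le> norm (e1 - e2) * norm g1 + norm (g1 - g2)"
    using norm_triangle_ineq[of "(e1 - e2) * g1" "e2 * (g1 - g2)"] by (simp add: norm_mult e2_def)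
  also have "\<dots> \<le> 2 * X * (3 * m) + 3 * \<mu>"
    using e g1 g12 nonneg by (intro add_mono mult_mono) auto
  finally have e_g: "norm (e1 * g1 - e2 * g2) \<le> 6 * X * m + 3 * \<mu>"
    by simp
  have "norm (cov_integrand \<beta> (s1, y1) (t, x) z - cov_integrand \<beta> (s2, y2) (t, x) z)
      = norm ((e1 * g1 - e2 * g2) * (cnj (gker t \<tau> \<xi>) * complex_of_real w))"
    by (simp add: cov_integrand_def z e1_def e2_def g1_def g2_def w_def algebra_simps)
  also have "\<dots> = norm (e1 * g1 - e2 * g2) * norm (gker t \<tau> \<xi>) * w"
    using nonneg by (simp add: norm_mult)
  also have "\<dots> \<le> (6 * X * m + 3 * \<mu>) * (3 * m) * w"
    using e_g gt nonneg by (intro mult_mono) auto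
  also have "\<dots> = 18 * X * m\<^sup>2 * w + 9 * \<mu> * m * w"
    by (simp add: power2_eq_square algebra_simps)
  also have "\<dots> \<le> 18 * X * m\<^sup>2 * w + 9 * \<mu> * (1 / R) * w"
    using nonneg by (intro add_left_mono mult_right_mono mult_left_mono) (auto simp: m_def)
  finally show ?thesis
    by (simp add: z X_def m_def \<mu>_def w_def R_def mult_ac)
qed

lemma abs_vcov_diff_le:
  assumes "integrable lborel (cov_integrand \<beta> p q)" "integrable lborel (cov_integrand \<beta> p' q)"
  shows "ennreal \<bar>vcov \<beta> p q - vcov \<beta> p' q\<bar>
    \<le> (\<integral>\<^sup>+z. ennreal (norm (cov_integrand \<beta> p q z - cov_integrand \<beta> p' q z)) \<partial>lborel)"
proof -
  have "vcov \<beta> p q - vcov \<beta> p' q = Re (integral\<^sup>L lborel (\<lambda>z. cov_integrand \<beta> p q z - cov_integrand \<beta> p' q z))"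
    using assms by (simp add: vcov_eq_integral)
  then have "\<bar>vcov \<beta> p q - vcov \<beta> p' q\<bar> \<le> cmod (integral\<^sup>L lborel (\<lambda>z. cov_integrand \<beta> p q z - cov_integrand \<beta> p' q z))"
    using abs_Re_le_cmod by simp
  then have "ennreal \<bar>vcov \<beta> p q - vcov \<beta> p' q\<bar>
      \<le> ennreal (cmod (integral\<^sup>L lborel (\<lambda>z. cov_integrand \<beta> p q z - cov_integrand \<beta> p' q z)))"
    by (rule ennreal_leI)
  also have "\<dots> \<le> (\<integral>\<^sup>+z. ennreal (norm (cov_integrand \<beta> p q z - cov_integrand \<beta> p' q z)) \<partial>lborel)"
    using assms by (intro integral_norm_bound_ennreal) auto
  finally show ?thesis .
qed

lemma abs_vcov_diff_le_kernels:
  fixes y1 y2 x :: "real ^ 'k::finite" and s1 s2 t \<beta> \<delta> T :: real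
  assumes s: "0 \<le> s1" "s1 \<le> T" "0 \<le> s2" "s2 \<le> T" "0 \<le> t" "t \<le> T" and T: "0 < T"
    and \<beta>: "0 < \<beta>" "\<beta> \<le> CARD('k)" "\<beta> < 2" and \<delta>: "0 < \<delta>" "\<delta> \<le> 1"
  defines "N1 \<equiv> \<lambda>z :: real \<times> (real ^ 'k). norm (snd z) powr \<delta> * (min T (1 / heat_symbol (fst z) (snd z)))\<^sup>2 * riesz_weight \<beta> (snd z)"
    and "N2 \<equiv> \<lambda>z :: real \<times> (real ^ 'k). min (1 / heat_symbol (fst z) (snd z)) \<bar>s1 - s2\<bar> * (1 / heat_symbol (fst z) (snd z))
      * riesz_weight \<beta> (snd z)"
  shows "ennreal \<bar>vcov \<beta> (s1, y1) (t, x) - vcov \<beta> (s2, y2) (t, x)\<bar>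
    \<le> ennreal (18 * norm (y1 - y2) powr \<delta>) * (\<integral>\<^sup>+z. ennreal (N1 z) \<partial>lborel) + 9 * (\<integral>\<^sup>+z. ennreal (N2 z) \<partial>lborel)"
proof -
  have [measurable]: "N1 \<in> borel_measurable borel" "N2 \<in> borel_measurable borel"
    unfolding N1_def N2_def riesz_weight_def by measurable
  have "ennreal \<bar>vcov \<beta> (s1, y1) (t, x) - vcov \<beta> (s2, y2) (t, x)\<bar>
      \<le> (\<integral>\<^sup>+z. ennreal (norm (cov_integrand \<beta> (s1, y1) (t, x) z - cov_integrand \<beta> (s2, y2) (t, x) z)) \<partial>lborel)"
    using s T \<beta> by (intro abs_vcov_diff_le cov_integrand_integrable[of _ T]) auto
  also have "\<dots> \<le> (\<integral>\<^sup>+z. ennreal (18 * norm (y1 - y2) powr \<delta>) * ennreal (N1 z) + 9 * ennreal (N2 z) \<partial>lborel)"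
  proof (rule nn_integral_mono)
    fix z
    have "0 \<le> N1 z" "0 \<le> N2 z"
      by (simp_all add: N1_def N2_def)
    then have "ennreal (18 * norm (y1 - y2) powr \<delta> * N1 z + 9 * N2 z)
        = ennreal (18 * norm (y1 - y2) powr \<delta>) * ennreal (N1 z) + 9 * ennreal (N2 z)"
      by (simp add: ennreal_mult)
    moreover have "norm (cov_integrand \<beta> (s1, y1) (t, x) z - cov_integrand \<beta> (s2, y2) (t, x) z)
        \<le> 18 * norm (y1 - y2) powr \<delta> * N1 z + 9 * N2 z"
      unfolding N1_def N2_def by (rule norm_cov_integrand_diff_le[OF s \<delta>])
    ultimately show "ennreal (norm (cov_integrand \<beta> (s1, y1) (t, x) z - cov_integrand \<beta> (s2, y2) (t, x) z))
        \<le> ennreal (18 * norm (y1 - y2) powr \<delta>) * ennreal (N1 z) + 9 * ennreal (N2 z)"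
      by (metis ennreal_leI)
  qed
  also have "\<dots> = ennreal (18 * norm (y1 - y2) powr \<delta>) * (\<integral>\<^sup>+z. ennreal (N1 z) \<partial>lborel) + 9 * (\<integral>\<^sup>+z. ennreal (N2 z) \<partial>lborel)"
    by (simp add: nn_integral_add nn_integral_cmult)
  finally show ?thesis .
qed

lemma vcov_holder:
  fixes \<beta> \<delta> T :: real
  assumes \<beta>: "0 < \<beta>" "\<beta> \<le> CARD('k::finite)" "\<beta> < 2" and \<delta>: "0 < \<delta>" "\<delta> \<le> 1" "\<delta> < 2 - \<beta>"
    and T: "0 < T"
  obtains C where "\<And>s1 s2 t (y1 :: real ^ 'k) y2 x. 0 \<le> s1 \<Longrightarrow> s1 \<le> T \<Longrightarrow> 0 \<le> s2 \<Longrightarrow> s2 \<le> T \<Longrightarrow> 0 \<le> t \<Longrightarrow> t \<le> T \<Longrightarrow>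
     \<bar>vcov \<beta> (s1, y1) (t, x) - vcov \<beta> (s2, y2) (t, x)\<bar> \<le> C * (\<bar>s1 - s2\<bar> powr ((2 - \<beta>) / 2) + norm (y1 - y2) powr \<delta>)"
proof -
  define K1 where "K1 = enn2real (\<integral>\<^sup>+z. ennreal (norm (snd z) powr \<delta>
    * (min T (1 / heat_symbol (fst z) (snd z)))\<^sup>2 * riesz_weight \<beta> (snd z)) \<partial>(lborel :: (real \<times> (real ^ 'k)) measure))"
  have "(\<integral>\<^sup>+z. ennreal (norm (snd z) powr \<delta> * (min T (1 / heat_symbol (fst z) (snd z)))\<^sup>2 * riesz_weight \<beta> (snd z))
      \<partial>(lborel :: (real \<times> (real ^ 'k)) measure)) < \<infinity>"
    using nn_integral_spatial_kernel_finite[OF T, of \<beta> \<delta>, where 'a="real ^ 'k"] \<beta> \<delta> by simp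
  then have K1: "(\<integral>\<^sup>+z. ennreal (norm (snd z) powr \<delta> * (min T (1 / heat_symbol (fst z) (snd z)))\<^sup>2 * riesz_weight \<beta> (snd z))
      \<partial>(lborel :: (real \<times> (real ^ 'k)) measure)) = ennreal K1" "0 \<le> K1"
    by (auto simp: K1_def less_top[symmetric] ennreal_enn2real)
  obtain K2 where K2: "0 \<le> K2" "\<And>h. 0 < h \<Longrightarrow> (\<integral>\<^sup>+z. ennreal (min (1 / heat_symbol (fst z) (snd z)) h
      * (1 / heat_symbol (fst z) (snd z)) * riesz_weight \<beta> (snd z)) \<partial>(lborel :: (real \<times> (real ^ 'k)) measure))
      \<le> ennreal (K2 * h powr ((2 - \<beta>) / 2))"
    by (rule nn_integral_temporal_kernel_le[where 'a="real ^ 'k", of \<beta>]) (use \<beta> in auto)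
  have K2': "(\<integral>\<^sup>+z. ennreal (min (1 / heat_symbol (fst z) (snd z)) h * (1 / heat_symbol (fst z) (snd z))
      * riesz_weight \<beta> (snd z)) \<partial>(lborel :: (real \<times> (real ^ 'k)) measure)) \<le> ennreal (K2 * h powr ((2 - \<beta>) / 2))"
    if "0 \<le> h" for h
    using that K2 by (cases "h = 0") auto
  show thesis
  proof (rule that[of "18 * K1 + 9 * K2"])
    fix s1 s2 t :: real and y1 y2 x :: "real ^ 'k"
    assume s: "0 \<le> s1" "s1 \<le> T" "0 \<le> s2" "s2 \<le> T" "0 \<le> t" "t \<le> T"
    define h where "h = \<bar>s1 - s2\<bar> powr ((2 - \<beta>) / 2)"
    define \<eta> where "\<eta> = norm (y1 - y2) powr \<delta>"
    have "ennreal \<bar>vcov \<beta> (s1, y1) (t, x) - vcov \<beta> (s2, y2) (t, x)\<bar>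
        \<le> ennreal (18 * \<eta>) * ennreal K1 + 9 * (\<integral>\<^sup>+z. ennreal (min (1 / heat_symbol (fst z) (snd z)) \<bar>s1 - s2\<bar>
          * (1 / heat_symbol (fst z) (snd z)) * riesz_weight \<beta> (snd z)) \<partial>(lborel :: (real \<times> (real ^ 'k)) measure))"
      using abs_vcov_diff_le_kernels[OF s T \<beta> \<delta>(1,2)]
      unfolding K1(1) \<eta>_def .
    also have "\<dots> \<le> ennreal (18 * \<eta>) * ennreal K1 + 9 * ennreal (K2 * h)"
      unfolding h_def by (intro add_left_mono mult_left_mono K2') auto
    also have "\<dots> = ennreal (18 * \<eta> * K1 + 9 * K2 * h)"
      using K1(2) K2(1) by (simp add: \<eta>_def h_def ennreal_mult ennreal_plus mult.assoc)
    finally have "\<bar>vcov \<beta> (s1, y1) (t, x) - vcov \<beta> (s2, y2) (t, x)\<bar> \<le> 18 * \<eta> * K1 + 9 * K2 * h"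
      using K1(2) K2(1) by (subst (asm) ennreal_le_iff) (auto simp: \<eta>_def h_def)
    also have "\<dots> \<le> (18 * K1 + 9 * K2) * (h + \<eta>)"
      using K1(2) K2(1) by (simp add: algebra_simps \<eta>_def h_def)
    finally show "\<bar>vcov \<beta> (s1, y1) (t, x) - vcov \<beta> (s2, y2) (t, x)\<bar>
        \<le> (18 * K1 + 9 * K2) * (\<bar>s1 - s2\<bar> powr ((2 - \<beta>) / 2) + norm (y1 - y2) powr \<delta>)"
      by (simp add: h_def \<eta>_def)
  qed
qed

lemma integrable_mult_square_integrable:
  fixes a b :: "'a \<Rightarrow> real"
  assumes [measurable]: "a \<in> borel_measurable M" "b \<in> borel_measurable M"
    and "integrable M (\<lambda>\<omega>. (a \<omega>)\<^sup>2)" "integrable M (\<lambda>\<omega>. (b \<omega>)\<^sup>2)"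
  shows "integrable M (\<lambda>\<omega>. a \<omega> * b \<omega>)"
proof (rule Bochner_Integration.integrable_bound)
  show "integrable M (\<lambda>\<omega>. (a \<omega>)\<^sup>2 + (b \<omega>)\<^sup>2)"
    using assms(3,4) by (rule Bochner_Integration.integrable_add)
  show "AE \<omega> in M. norm (a \<omega> * b \<omega>) \<le> norm ((a \<omega>)\<^sup>2 + (b \<omega>)\<^sup>2)"
  proof (rule AE_I2)
    fix \<omega>
    have "2 * \<bar>a \<omega>\<bar> * \<bar>b \<omega>\<bar> \<le> (a \<omega>)\<^sup>2 + (b \<omega>)\<^sup>2" "0 \<le> \<bar>a \<omega>\<bar> * \<bar>b \<omega>\<bar>"
      using sum_squares_bound[of "\<bar>a \<omega>\<bar>" "\<bar>b \<omega>\<bar>"] by simp_all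
    then show "norm (a \<omega> * b \<omega>) \<le> norm ((a \<omega>)\<^sup>2 + (b \<omega>)\<^sup>2)"
      unfolding real_norm_def abs_mult by linarith
  qed
qed measurable

lemma hat_v_process_cov_diff:
  assumes "hat_v_process M d \<beta> X" "j < d"
  shows "integral\<^sup>L M (\<lambda>\<omega>. (X j p1 \<omega> - X j p2 \<omega>) * X j q \<omega>) = vcov \<beta> p1 q - vcov \<beta> p2 q"
proof -
  have meas: "\<And>p. X j p \<in> borel_measurable M" and sq: "\<And>p. integrable M (\<lambda>\<omega>. (X j p \<omega>)\<^sup>2)"
    and cov: "\<And>p q. integral\<^sup>L M (\<lambda>\<omega>. X j p \<omega> * X j q \<omega>) = vcov \<beta> p q"
    using assms unfolding hat_v_process_def by auto
  have "integral\<^sup>L M (\<lambda>\<omega>. (X j p1 \<omega> - X j p2 \<omega>) * X j q \<omega>)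
      = integral\<^sup>L M (\<lambda>\<omega>. X j p1 \<omega> * X j q \<omega>) - integral\<^sup>L M (\<lambda>\<omega>. X j p2 \<omega> * X j q \<omega>)"
    unfolding left_diff_distrib
    by (intro Bochner_Integration.integral_diff integrable_mult_square_integrable meas sq)
  then show ?thesis
    by (simp add: cov)
qed

lemma fst_le_of_mem_cbox: "p \<in> cbox a b \<Longrightarrow> fst p \<le> fst b"
  for p a b :: "real \<times> 'b::euclidean_space"
  by (cases p; cases a; cases b) (auto simp: cbox_Pair_iff)

lemma Bbox_mono:
  assumes "0 \<le> r" "r \<le> r'" "\<beta> < 2"
  shows "Bbox \<beta> r p \<subseteq> Bbox \<beta> r' p"
proof -
  have "r powr e \<le> r' powr e" if "0 \<le> e" for e
    using assms that by (intro powr_mono2) auto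
  from this[of "4 / (2 - \<beta>)"] this[of "2 / (2 - \<beta>)"] show ?thesis
    using assms(3) unfolding Bbox_def by (auto intro: order_trans)
qed

lemma hat_v_increment_cov_le:
  fixes X :: "nat \<Rightarrow> 'k::finite pt \<Rightarrow> 'a \<Rightarrow> real" and \<beta> \<delta> :: real
  assumes X: "hat_v_process M d \<beta> X"
    and \<beta>: "0 < \<beta>" "\<beta> \<le> CARD('k)" "\<beta> < 2" and \<delta>: "0 < \<delta>" "\<delta> \<le> 1" "\<delta> < 2 - \<beta>"
    and F_pos: "cbox a b \<subseteq> {p. 0 < fst p}" and q: "q \<in> cbox a b"
  obtains C where "\<And>j s1 y1 s2 y2. j < d \<Longrightarrow> (s1, y1) \<in> cbox a b \<Longrightarrow> (s2, y2) \<in> cbox a b \<Longrightarrow>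
      \<bar>integral\<^sup>L M (\<lambda>\<omega>. (X j (s1, y1) \<omega> - X j (s2, y2) \<omega>) * X j q \<omega>)\<bar>
        \<le> C * (\<bar>s1 - s2\<bar> powr ((2 - \<beta>) / 2) + norm (y1 - y2) powr \<delta>)"
proof -
  have time: "0 < fst p \<and> fst p \<le> fst b" if "p \<in> cbox a b" for p
    using that F_pos fst_le_of_mem_cbox by blast
  have "0 < fst b"
    using time[OF q] by linarith
  then obtain C where C: "\<And>s1 s2 t (y1 :: real ^ 'k) y2 x. 0 \<le> s1 \<Longrightarrow> s1 \<le> fst b \<Longrightarrow> 0 \<le> s2 \<Longrightarrow> s2 \<le> fst b
      \<Longrightarrow> 0 \<le> t \<Longrightarrow> t \<le> fst b \<Longrightarrow>
      \<bar>vcov \<beta> (s1, y1) (t, x) - vcov \<beta> (s2, y2) (t, x)\<bar> \<le> C * (\<bar>s1 - s2\<bar> powr ((2 - \<beta>) / 2) + norm (y1 - y2) powr \<delta>)"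
    using vcov_holder[OF \<beta> \<delta>] by blast
  show thesis
  proof (rule that[of C])
    fix j s1 y1 s2 y2
    assume "j < d" "(s1, y1) \<in> cbox a b" "(s2, y2) \<in> cbox a b"
    then show "\<bar>integral\<^sup>L M (\<lambda>\<omega>. (X j (s1, y1) \<omega> - X j (s2, y2) \<omega>) * X j q \<omega>)\<bar>
        \<le> C * (\<bar>s1 - s2\<bar> powr ((2 - \<beta>) / 2) + norm (y1 - y2) powr \<delta>)"
      using hat_v_process_cov_diff[OF X] C time[OF q] time[of "(s1, y1)"] time[of "(s2, y2)"]
      by (cases q) (simp add: less_imp_le)
  qed
qed

theorem lemma5p5:
  fixes M :: "'a measure" and X :: "nat \<Rightarrow> 'k::finite pt \<Rightarrow> 'a \<Rightarrow> real"
    and d :: nat and \<beta> \<epsilon>0 \<rho> \<delta> :: real and a b :: "'k pt" and t :: real and x :: "real ^ 'k"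
  assumes d: "d \<ge> 1"
    and beta: "(0 < \<beta> \<and> \<beta> < min (real CARD('k)) 2) \<or> (CARD('k) = 1 \<and> \<beta> = 1)"
    and X: "hat_v_process M d \<beta> X"
    and F_pos: "cbox a b \<subseteq> {p. 0 < fst p}"
    and eps0: "0 < \<epsilon>0" "\<epsilon>0 < 1"
    and tx: "(t, x) \<in> cbox a b"
    and rho: "0 < \<rho>" "\<rho> \<le> \<epsilon>0"
    and B3: "Bbox \<beta> (3 * \<rho>) (t, x) \<subseteq> cbox a b"
    and delta: "(2 - \<beta>) / 2 < \<delta>" "\<delta> < min (2 - \<beta>) 1"
  shows "\<exists>C::real. \<forall>j<d.
     (\<forall>s1 y1 s2 y2. (s1, y1) \<in> Bbox \<beta> (2 * \<rho>) (t, x) \<longrightarrow> (s2, y2) \<in> Bbox \<beta> (2 * \<rho>) (t, x) \<longrightarrow>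
        \<bar>integral\<^sup>L M (\<lambda>\<omega>. (X j (s1, y1) \<omega> - X j (s2, y2) \<omega>) * X j (t, x) \<omega>)\<bar>
          \<le> C * (\<bar>s1 - s2\<bar> powr ((2 - \<beta>) / 2) + norm (y1 - y2) powr \<delta>)) \<and>
     (\<forall>tt xx. Bbox \<beta> (2 * \<rho>) (tt, xx) \<subseteq> cbox a b \<longrightarrow> Dist \<beta> (t, x) (tt, xx) \<ge> 6 * \<rho> \<longrightarrow>
       (\<forall>s1 y1 s2 y2. (s1, y1) \<in> Bbox \<beta> (2 * \<rho>) (tt, xx) \<longrightarrow> (s2, y2) \<in> Bbox \<beta> (2 * \<rho>) (tt, xx) \<longrightarrow>
        \<bar>integral\<^sup>L M (\<lambda>\<omega>. (X j (s1, y1) \<omega> - X j (s2, y2) \<omega>) * X j (t, x) \<omega>)\<bar>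
          \<le> C * (\<bar>s1 - s2\<bar> powr ((2 - \<beta>) / 2) + norm (y1 - y2) powr \<delta>)))"
proof -
  have \<beta>: "0 < \<beta>" "\<beta> \<le> CARD('k)" "\<beta> < 2"
    using beta by auto
  have \<delta>: "0 < \<delta>" "\<delta> \<le> 1" "\<delta> < 2 - \<beta>"
    using delta \<beta> by (auto simp: min_def split: if_splits)
  obtain C where C: "\<And>j s1 y1 s2 y2. j < d \<Longrightarrow> (s1, y1) \<in> cbox a b \<Longrightarrow> (s2, y2) \<in> cbox a b \<Longrightarrow>
      \<bar>integral\<^sup>L M (\<lambda>\<omega>. (X j (s1, y1) \<omega> - X j (s2, y2) \<omega>) * X j (t, x) \<omega>)\<bar>
        \<le> C * (\<bar>s1 - s2\<bar> powr ((2 - \<beta>) / 2) + norm (y1 - y2) powr \<delta>)"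
    using hat_v_increment_cov_le[OF X \<beta> \<delta> F_pos tx] by blast
  have "Bbox \<beta> (2 * \<rho>) (t, x) \<subseteq> cbox a b"
    using Bbox_mono[of "2 * \<rho>" "3 * \<rho>" \<beta>] rho \<beta> B3 by auto
  then show ?thesis
    by (intro exI[of _ C] allI impI conjI) (auto intro!: C)
qed

end
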